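(* Let $\sigma\in S_n$, $a\in\{1,\dots,n-1\}$, $I\in\mathcal I_\lambda$, and suppose $\sigma(a)\in I_k$, $\sigma(a+1)\in I_l$. Write $\sigma s_{a,a+1}$ for the permutation $m\mapsto\sigma(s_{a,a+1}(m))$ and $I'=s_{\sigma(a),\sigma(a+1)}(I)$. Then, with $w=z_{\sigma(a)}/z_{\sigma(a+1)}$: if $k=l$, $W_{\sigma s_{a,a+1},I}=W_{\sigma,I}$; if $k<l$, $W_{\sigma s_{a,a+1},I}=h\frac{1-w}{1-hw}W_{\sigma,I}+\frac{1-h}{1-hw}W_{\sigma,I'}$; if $k>l$, $W_{\sigma s_{a,a+1},I}=\frac{1-w}{1-hw}W_{\sigma,I}+(1-h)\frac{w}{1-hw}W_{\sigma,I'}$.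
   Context: Fix $N,n$, $\lambda\in\mathbb Z_{\ge0}^N$, $\sum\lambda_k=n$; $\lambda^{(k)}=\lambda_1+\dots+\lambda_k$, $\lambda^{\{1\}}=\sum_{k=1}^{N-1}\lambda^{(k)}$. $\mathcal I_\lambda$ = ordered partitions $I=(I_1,\dots,I_N)$ of $\{1,\dots,n\}$ with $|I_k|=\lambda_k$; $I_1\cup\dots\cup I_k=\{i^{(k)}_1<\dots<i^{(k)}_{\lambda^{(k)}}\}$; for $\tau\in S_n$, $\tau(I)=(\tau(I_1),\dots,\tau(I_N))$; $s_{a,b}$ denotes the transposition of $a$ and $b$. Weight functions: variables $t^{(k)}_a$ ($1\le k\le N-1$), $z_1,\dots,z_n$, $h$, $t^{(N)}_a=z_a$; $U_I=\prod_{k=1}^{N-1}\prod_{a=1}^{\lambda^{(k)}}\Big(\prod_{c:\,i^{(k+1)}_c<i^{(k)}_a}(1-ht^{(k+1)}_c/t^{(k)}_a)\prod_{c:\,i^{(k+1)}_c>i^{(k)}_a}(1-t^{(k+1)}_c/t^{(k)}_a)\prod_{b=a+1}^{\lambda^{(k)}}\frac{1-ht^{(k)}_b/t^{(k)}_a}{1-t^{(k)}_b/t^{(k)}_a}\Big)$ ($c\in\{1..\lambda^{(k+1)}\}$); $W_I=(1-h)^{\lambda^{\{1\}}}\mathrm{Sym}_{t^{(1)}}\cdots\mathrm{Sym}_{t^{(N-1)}}U_I$ (sum over permutations within each group $t^{(k)}$); $W_{\sigma,I}(t,z,h)=W_{\sigma^{-1}(I)}(t,z_{\sigma(1)},\dots,z_{\sigma(n)},h)$.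 The identities are identities of functions of $t,z,h$. *)

theory Defs
  imports Complex_Main "HOL-Combinatorics.Transposition" "HOL-Combinatorics.Permutations"
begin

definition lsum :: "(nat \<Rightarrow> nat) \<Rightarrow> nat \<Rightarrow> nat" where
  "lsum lam k = (\<Sum>j=1..k. lam j)"

definition ordpart :: "nat \<Rightarrow> nat \<Rightarrow> (nat \<Rightarrow> nat) \<Rightarrow> (nat \<Rightarrow> nat set) set" where
  "ordpart N n lam = {I. (\<forall>k\<in>{1..N}. card (I k) = lam k)
      \<and> (\<forall>k. k \<notin> {1..N} \<longrightarrow> I k = {})
      \<and> (\<forall>j\<in>{1..N}. \<forall>k\<in>{1..N}. j \<noteq> k \<longrightarrow> I j \<inter> I k = {})
      \<and> (\<Union>k\<in>{1..N}. I k) = {1..n}}"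

definition pidx :: "(nat \<Rightarrow> nat set) \<Rightarrow> nat \<Rightarrow> nat \<Rightarrow> nat" where
  "pidx I k c = sorted_list_of_set (\<Union>j\<in>{1..k}. I j) ! (c - 1)"

text \<open>variables t^(k)_a, with t^(N)_a = z_a\<close>
definition tvar :: "nat \<Rightarrow> (nat \<Rightarrow> nat \<Rightarrow> 'a) \<Rightarrow> (nat \<Rightarrow> 'a) \<Rightarrow> nat \<Rightarrow> nat \<Rightarrow> 'a" where
  "tvar N t z k a = (if k = N then z a else t k a)"

definition Ufun :: "nat \<Rightarrow> (nat \<Rightarrow> nat) \<Rightarrow> (nat \<Rightarrow> nat set) \<Rightarrow> (nat \<Rightarrow> nat \<Rightarrow> 'a::field)
    \<Rightarrow> (nat \<Rightarrow> 'a) \<Rightarrow> 'a \<Rightarrow> 'a" where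
  "Ufun N lam I t z h =
     (\<Prod>k\<in>{1..N-1}. \<Prod>a\<in>{1..lsum lam k}.
        (\<Prod>c\<in>{c\<in>{1..lsum lam (k+1)}. pidx I (k+1) c < pidx I k a}.
            1 - h * tvar N t z (k+1) c / tvar N t z k a)
      * (\<Prod>c\<in>{c\<in>{1..lsum lam (k+1)}. pidx I (k+1) c > pidx I k a}.
            1 - tvar N t z (k+1) c / tvar N t z k a)
      * (\<Prod>b\<in>{a+1..lsum lam k}.
            (1 - h * tvar N t z k b / tvar N t z k a) / (1 - tvar N t z k b / tvar N t z k a)))"

definition symperms :: "nat \<Rightarrow> (nat \<Rightarrow> nat) \<Rightarrow> (nat \<Rightarrow> nat \<Rightarrow> nat) set" where
  "symperms N lam = {\<rho>. \<forall>k. (k \<in> {1..N-1} \<longrightarrow> \<rho> k permutes {1..lsum lam k})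
                         \<and> (k \<notin> {1..N-1} \<longrightarrow> \<rho> k = id)}"

definition Wfun :: "nat \<Rightarrow> (nat \<Rightarrow> nat) \<Rightarrow> (nat \<Rightarrow> nat set) \<Rightarrow> (nat \<Rightarrow> nat \<Rightarrow> 'a::field)
    \<Rightarrow> (nat \<Rightarrow> 'a) \<Rightarrow> 'a \<Rightarrow> 'a" where
  "Wfun N lam I t z h = (1 - h) ^ (\<Sum>k=1..N-1. lsum lam k)
     * (\<Sum>\<rho>\<in>symperms N lam. Ufun N lam I (\<lambda>k a. t k (\<rho> k a)) z h)"

definition Wsig :: "nat \<Rightarrow> (nat \<Rightarrow> nat) \<Rightarrow> (nat \<Rightarrow> nat) \<Rightarrow> (nat \<Rightarrow> nat set)
    \<Rightarrow> (nat \<Rightarrow> nat \<Rightarrow> 'a::field) \<Rightarrow> (nat \<Rightarrow> 'a) \<Rightarrow> 'a \<Rightarrow> 'a" where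
  "Wsig N lam \<sigma> I t z h = Wfun N lam (\<lambda>k. inv \<sigma> ` I k) t (\<lambda>a. z (\<sigma> a)) h"

end

theory Submission
  imports Defs
begin

text \<open>
  Replacing \<open>z\<close> by \<open>z \<circ> \<sigma>\<close> and \<open>I\<close> by \<open>\<sigma>\<^sup>-\<^sup>1(I)\<close>, everything reduces to exchanging the positions
  \<open>a\<close> and \<open>a + 1\<close> in one weight function. Its summand \<open>U\<close> is a product of elementary factors over
  ordered pairs of nodes \<open>(m, p)\<close>, a node standing for the variable of the position \<open>p\<close> at level
  \<open>m\<close>. The nodes of the positions \<open>a\<close> and \<open>a + 1\<close> form two strands, entering at the levels \<open>k\<close>
  and \<open>l\<close>. Exchanging the two strands at any set of levels where both are present leaves the
  symmetrisation invariant and all factors not joining two strand nodes unchanged, so averaging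
  over these exchanges splits every summand into an untouched part times a sum over the exchanged
  levels. That sum is computed rung by rung from the top level (a ladder sum), and one rational
  identity per rung propagates the three-term relation of the theorem down the ladder.
\<close>

section \<open>Ladder sums\<close>

text \<open>The factors of \<open>U\<close> joining two strands with values \<open>X\<close>, \<open>Y\<close> at one level and \<open>A\<close>, \<open>B\<close>
  at the next one.\<close>

definition ladder_factor :: "'a::field \<Rightarrow> 'a \<Rightarrow> 'a \<Rightarrow> 'a \<Rightarrow> 'a \<Rightarrow> 'a" where
  "ladder_factor h X Y A B = (1 - B/X) * (1 - h*A/Y) * ((1 - h*Y/X)/(1 - Y/X))"

lemma ladder_factor_swap_sum:
  assumes "X \<noteq> 0" "Y \<noteq> 0" "X \<noteq> Y"
  shows "ladder_factor h X Y A B + ladder_factor h Y X A B = ladder_factor h X Y B A + ladder_factor h Y X B A"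
proof -
  have "X - Y \<noteq> 0" "Y - X \<noteq> 0" using assms by auto
  then show ?thesis using assms unfolding ladder_factor_def
    by (simp add: field_simps)
qed

lemma ladder_factor_eq:
  assumes "X \<noteq> 0" "Y \<noteq> 0" "X \<noteq> Y"
  shows "ladder_factor h X Y A B = (X - B)*(Y - h*A)*(X - h*Y) / (X*Y*(X-Y))"
proof -
  have "X - Y \<noteq> 0" using assms by auto
  then show ?thesis using assms unfolding ladder_factor_def by (simp add: field_simps)
qed

lemma ladder_factor_relation_poly:
  fixes c1 c2 :: "'a::field"
  assumes H1: "(Y - h*X) * q2 = c1*(Y-X)*r1 + (1-h)*(c2*Y + (1-c2)*X)*q1"
    and H2: "(X - h*Y) * q1 = c1*(X-Y)*r2 + (1-h)*(c2*X + (1-c2)*Y)*q2"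
  shows "(Y-X)*((B - h*A) * ((X - A)*(Y - h*B)*(X - h*Y) * q1 - (Y - A)*(X - h*B)*(Y - h*X) * q2))
       = (Y-X)*(c1*(B-A)*((X - B)*(Y - h*A)*(X - h*Y) * r1 - (Y - B)*(X - h*A)*(Y - h*X) * r2)
         + (1-h)*(c2*B + (1-c2)*A)*((X - B)*(Y - h*A)*(X - h*Y) * q1 - (Y - B)*(X - h*A)*(Y - h*X) * q2))"
  using H1 H2 by algebra

lemma ladder_factor_eq_swapped:
  assumes "X \<noteq> 0" "Y \<noteq> 0" "X \<noteq> Y"
  shows "ladder_factor h Y X A B = - ((Y - B)*(X - h*A)*(Y - h*X) / (X*Y*(X-Y)))"
proof -
  have "X - Y \<noteq> 0" "Y - X \<noteq> 0" using assms by auto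
  then show ?thesis using assms unfolding ladder_factor_def by (simp add: field_simps)
qed

lemma ladder_factor_relation:
  fixes c1 c2 :: "'a::field"
  assumes "X \<noteq> 0" "Y \<noteq> 0" "X \<noteq> Y"
    and H1: "(Y - h*X) * q2 = c1*(Y-X)*r1 + (1-h)*(c2*Y + (1-c2)*X)*q1"
    and H2: "(X - h*Y) * q1 = c1*(X-Y)*r2 + (1-h)*(c2*X + (1-c2)*Y)*q2"
  shows "(B - h*A) * (ladder_factor h X Y B A * q1 + ladder_factor h Y X B A * q2)
       = c1*(B-A)*(ladder_factor h X Y A B * r1 + ladder_factor h Y X A B * r2)
         + (1-h)*(c2*B + (1-c2)*A)*(ladder_factor h X Y A B * q1 + ladder_factor h Y X A B * q2)"
proof -
  define d where "d = X*Y*(X-Y)"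
  have d0: "d \<noteq> 0" using assms by (simp add: d_def)
  have yx: "Y - X \<noteq> 0" using assms by simp
  note P = ladder_factor_relation_poly[OF H1 H2, of B A]
  have L: "(B - h*A) * (ladder_factor h X Y B A * q1 + ladder_factor h Y X B A * q2)
     = ((B - h*A) * ((X - A)*(Y - h*B)*(X - h*Y) * q1 - (Y - A)*(X - h*B)*(Y - h*X) * q2)) / d"
    unfolding ladder_factor_eq[OF assms(1-3)] ladder_factor_eq_swapped[OF assms(1-3)] d_def[symmetric]
    using d0 by (simp add: field_simps)
  have R: "c1*(B-A)*(ladder_factor h X Y A B * r1 + ladder_factor h Y X A B * r2)
         + (1-h)*(c2*B + (1-c2)*A)*(ladder_factor h X Y A B * q1 + ladder_factor h Y X A B * q2)
     = (c1*(B-A)*((X - B)*(Y - h*A)*(X - h*Y) * r1 - (Y - B)*(X - h*A)*(Y - h*X) * r2)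
         + (1-h)*(c2*B + (1-c2)*A)*((X - B)*(Y - h*A)*(X - h*Y) * q1 - (Y - B)*(X - h*A)*(Y - h*X) * q2)) / d"
    unfolding ladder_factor_eq[OF assms(1-3)] ladder_factor_eq_swapped[OF assms(1-3)] d_def[symmetric]
    using d0 by (simp add: field_simps)
  show ?thesis unfolding L R using P yx by simp
qed

text \<open>\<open>ladder_sum h b X Y n0 j A B\<close> sums over both orders of the strand values at each of the
  levels \<open>n0 ..< n0 + j\<close>, below a rung with values \<open>A\<close>, \<open>B\<close>; \<open>b\<close> is the boundary factor
  at the bottom level \<open>n0\<close>.\<close>

fun ladder_sum :: "'a::field \<Rightarrow> ('a \<Rightarrow> 'a \<Rightarrow> 'a) \<Rightarrow> (nat \<Rightarrow> 'a) \<Rightarrow> (nat \<Rightarrow> 'a)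
    \<Rightarrow> nat \<Rightarrow> nat \<Rightarrow> 'a \<Rightarrow> 'a \<Rightarrow> 'a" where
  "ladder_sum h b X Y n0 0 A B = b A B"
| "ladder_sum h b X Y n0 (Suc j) A B =
     ladder_factor h (X (n0+j)) (Y (n0+j)) A B * ladder_sum h b X Y n0 j (X (n0+j)) (Y (n0+j))
   + ladder_factor h (Y (n0+j)) (X (n0+j)) A B * ladder_sum h b X Y n0 j (Y (n0+j)) (X (n0+j))"

lemma ladder_sum_cong:
  "(\<And>i. i < j \<Longrightarrow> X' (n0+i) = X (n0+i) \<and> Y' (n0+i) = Y (n0+i))
   \<Longrightarrow> ladder_sum h b X' Y' n0 j = ladder_sum h b X Y n0 j"
  by (induction j) (auto simp: fun_eq_iff)

lemma ladder_sum_swap: "ladder_sum h b Y X n0 j = ladder_sum h b X Y n0 j"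
  by (induction j) (auto simp: fun_eq_iff)

definition swap_on :: "nat set \<Rightarrow> (nat \<Rightarrow> 'a) \<Rightarrow> (nat \<Rightarrow> 'a) \<Rightarrow> nat \<Rightarrow> 'a" where
  "swap_on E X Y m = (if m \<in> E then Y m else X m)"

lemma swap_on_notin: "m \<notin> E \<Longrightarrow> swap_on E X Y m = X m"
  by (simp add: swap_on_def)

lemma swap_on_insert: "x \<notin> E \<Longrightarrow> swap_on (insert x E) X Y = swap_on E (X(x := Y x)) (Y(x := X x))"
  by (auto simp: fun_eq_iff swap_on_def)

lemma sum_Pow_insert:
  assumes "finite A" "x \<notin> A"
  shows "(\<Sum>E\<in>Pow (insert x A). f E) = (\<Sum>E\<in>Pow A. f E + f (insert x E))"
proof -
  have "inj_on (insert x) (Pow A)" using assms(2) by (auto simp: inj_on_def)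
  moreover have "Pow A \<inter> insert x ` Pow A = {}" using assms(2) by auto
  ultimately show ?thesis
    unfolding Pow_insert using assms(1) by (simp add: sum.union_disjoint sum.reindex sum.distrib)
qed

lemma sum_Pow_eq_ladder_sum:
  "(\<Sum>E\<in>Pow {n0..<n0+j}. b (swap_on E X Y n0) (swap_on E Y X n0) *
      (\<Prod>m\<in>{n0..<n0+j}. ladder_factor h (swap_on E X Y m) (swap_on E Y X m) (swap_on E X Y (Suc m)) (swap_on E Y X (Suc m))))
   = ladder_sum h b X Y n0 j (X (n0+j)) (Y (n0+j))"
proof (induction j arbitrary: X Y)
  case 0
  then show ?case by (simp add: swap_on_def)
next
  case (Suc j)
  define x where "x = n0 + j"
  define A where "A = {n0..<x}"
  define G where "G X Y E = b (swap_on E X Y n0) (swap_on E Y X n0) *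
      (\<Prod>m\<in>A. ladder_factor h (swap_on E X Y m) (swap_on E Y X m) (swap_on E X Y (Suc m)) (swap_on E Y X (Suc m)))"
    for X Y :: "nat \<Rightarrow> 'a" and E
  have A: "finite A" "x \<notin> A" "{n0..<n0 + Suc j} = insert x A" by (auto simp: A_def x_def)
  have top: "b (swap_on E X' Y' n0) (swap_on E Y' X' n0) * (\<Prod>m\<in>insert x A.
        ladder_factor h (swap_on E X' Y' m) (swap_on E Y' X' m) (swap_on E X' Y' (Suc m)) (swap_on E Y' X' (Suc m)))
      = ladder_factor h (X' x) (Y' x) (X' (Suc x)) (Y' (Suc x)) * G X' Y' E"
    if "E \<in> Pow A" for E X' Y'
  proof -
    have "x \<notin> E" "Suc x \<notin> E" using that by (auto simp: A_def)
    then show ?thesis using A by (simp add: G_def swap_on_notin)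
  qed
  define X' where "X' = X(x := Y x)"
  define Y' where "Y' = Y(x := X x)"
  have swapped: "(\<Sum>E\<in>Pow A. G X' Y' E) = ladder_sum h b X Y n0 j (Y x) (X x)"
  proof -
    have "(\<Sum>E\<in>Pow A. G X' Y' E) = ladder_sum h b X' Y' n0 j (X' x) (Y' x)"
      using Suc.IH[of X' Y'] by (simp add: G_def A_def x_def)
    moreover have "ladder_sum h b X' Y' n0 j = ladder_sum h b X Y n0 j"
      by (rule ladder_sum_cong) (auto simp: X'_def Y'_def x_def)
    ultimately show ?thesis by (simp add: X'_def Y'_def)
  qed
  have "(\<Sum>E\<in>Pow {n0..<n0 + Suc j}. b (swap_on E X Y n0) (swap_on E Y X n0) * (\<Prod>m\<in>{n0..<n0 + Suc j}.
        ladder_factor h (swap_on E X Y m) (swap_on E Y X m) (swap_on E X Y (Suc m)) (swap_on E Y X (Suc m))))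
      = (\<Sum>E\<in>Pow A. ladder_factor h (X x) (Y x) (X (Suc x)) (Y (Suc x)) * G X Y E
          + ladder_factor h (Y x) (X x) (X (Suc x)) (Y (Suc x)) * G X' Y' E)"
    unfolding A(3) sum_Pow_insert[OF A(1,2)]
  proof (rule sum.cong[OF refl])
    fix E assume E: "E \<in> Pow A"
    then have "x \<notin> E" using A(2) by auto
    then show "b (swap_on E X Y n0) (swap_on E Y X n0) * (\<Prod>m\<in>insert x A. ladder_factor h (swap_on E X Y m) (swap_on E Y X m) (swap_on E X Y (Suc m)) (swap_on E Y X (Suc m)))
        + b (swap_on (insert x E) X Y n0) (swap_on (insert x E) Y X n0) * (\<Prod>m\<in>insert x A. ladder_factor h (swap_on (insert x E) X Y m) (swap_on (insert x E) Y X m) (swap_on (insert x E) X Y (Suc m)) (swap_on (insert x E) Y X (Suc m)))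
      = ladder_factor h (X x) (Y x) (X (Suc x)) (Y (Suc x)) * G X Y E + ladder_factor h (Y x) (X x) (X (Suc x)) (Y (Suc x)) * G X' Y' E"
      unfolding swap_on_insert[OF \<open>x \<notin> E\<close>] top[OF E] by (simp add: X'_def Y'_def)
  qed
  also have "\<dots> = ladder_sum h b X Y n0 (Suc j) (X (Suc x)) (Y (Suc x))"
    using Suc.IH[of X Y] swapped by (simp add: sum.distrib sum_distrib_left[symmetric] G_def A_def x_def)
  finally show ?case by (simp add: x_def)
qed

lemma ladder_sum_symmetric:
  assumes "\<And>A B. b A B = b B A"
    and "\<And>i. i < j \<Longrightarrow> X (n0+i) \<noteq> 0 \<and> Y (n0+i) \<noteq> 0 \<and> X (n0+i) \<noteq> Y (n0+i)"
  shows "ladder_sum h b X Y n0 j A B = ladder_sum h b X Y n0 j B A"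
  using assms(2)
proof (induction j arbitrary: A B)
  case 0
  then show ?case using assms(1) by simp
next
  case (Suc j)
  have IH: "ladder_sum h b X Y n0 j (Y (n0+j)) (X (n0+j)) = ladder_sum h b X Y n0 j (X (n0+j)) (Y (n0+j))"
    using Suc by auto
  have nd: "X (n0+j) \<noteq> 0" "Y (n0+j) \<noteq> 0" "X (n0+j) \<noteq> Y (n0+j)" using Suc.prems[of j] by auto
  show ?case using ladder_factor_swap_sum[OF nd, of h A B]
    by (simp add: IH) (metis distrib_right)
qed

lemma ladder_sum_relation:
  fixes c1 c2 :: "'a::field"
  assumes "\<And>A B. (B - h*A) * bS B A = c1*(B-A)*b A B + (1-h)*(c2*B+(1-c2)*A)*bS A B"
    and "\<And>i. i < j \<Longrightarrow> X (n0+i) \<noteq> 0 \<and> Y (n0+i) \<noteq> 0 \<and> X (n0+i) \<noteq> Y (n0+i)"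
  shows "(B - h*A) * ladder_sum h bS X Y n0 j B A = c1*(B-A)*ladder_sum h b X Y n0 j A B
           + (1-h)*(c2*B+(1-c2)*A)*ladder_sum h bS X Y n0 j A B"
  using assms(2)
proof (induction j arbitrary: A B)
  case 0
  then show ?case using assms(1) by simp
next
  case (Suc j)
  have nd: "X (n0+j) \<noteq> 0" "Y (n0+j) \<noteq> 0" "X (n0+j) \<noteq> Y (n0+j)" using Suc.prems[of j] by auto
  have H: "(B - h*A) * ladder_sum h bS X Y n0 j B A = c1*(B-A)*ladder_sum h b X Y n0 j A B
           + (1-h)*(c2*B+(1-c2)*A)*ladder_sum h bS X Y n0 j A B" for A B
    using Suc by auto
  show ?case unfolding ladder_sum.simps
    using ladder_factor_relation[OF nd H[where A="X (n0+j)" and B="Y (n0+j)"] H[where A="Y (n0+j)" and B="X (n0+j)"], of B A]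
    by simp
qed

section \<open>Positions in ordered partitions\<close>

definition upto_union :: "(nat \<Rightarrow> nat set) \<Rightarrow> nat \<Rightarrow> nat set" where
  "upto_union J m = (\<Union>j\<in>{1..m}. J j)"

lemma pidx_eq_nth: "pidx J m c = sorted_list_of_set (upto_union J m) ! (c - 1)"
  by (simp add: pidx_def upto_union_def)

lemma strict_sorted_nth_less_iff:
  assumes "sorted_wrt (<) (xs :: nat list)" "i < length xs" "j < length xs"
  shows "xs ! i < xs ! j \<longleftrightarrow> i < j"
  using assms sorted_wrt_nth_less[OF assms(1)] by (metis less_asym linorder_neqE_nat)

lemma bij_betw_sorted_list_nth:
  assumes "finite (A :: nat set)"
  shows "bij_betw (\<lambda>c. sorted_list_of_set A ! (c - 1)) {1..card A} A"
proof -
  let ?xs = "sorted_list_of_set A"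
  have len: "length ?xs = card A" by simp
  have st: "sorted_wrt (<) ?xs" using assms by simp
  have d: "distinct ?xs" using assms by simp
  show ?thesis
  proof (rule bij_betwI')
    fix x y assume "x \<in> {1..card A}" "y \<in> {1..card A}"
    then show "(?xs ! (x - 1) = ?xs ! (y - 1)) = (x = y)"
      using d len by (auto simp: nth_eq_iff_index_eq)
  next
    fix x assume "x \<in> {1..card A}"
    then have "x - 1 < length ?xs" using len by auto
    then have "?xs ! (x - 1) \<in> set ?xs" by simp
    then show "?xs ! (x - 1) \<in> A" using assms by simp
  next
    fix y assume "y \<in> A"
    then have "y \<in> set ?xs" using assms by simp
    then obtain i where "i < length ?xs" "?xs ! i = y" by (metis in_set_conv_nth)
    then show "\<exists>x\<in>{1..card A}. y = ?xs ! (x - 1)"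
      using len by (intro bexI[of _ "Suc i"]) auto
  qed
qed

lemma sorted_list_of_set_nth_less_iff:
  assumes "finite (A :: nat set)" "c \<in> {1..card A}" "d \<in> {1..card A}"
  shows "sorted_list_of_set A ! (c - 1) < sorted_list_of_set A ! (d - 1) \<longleftrightarrow> c < d"
proof -
  have "sorted_wrt (<) (sorted_list_of_set A)" using assms by simp
  moreover have "c - 1 < length (sorted_list_of_set A)" "d - 1 < length (sorted_list_of_set A)"
    using assms by auto
  ultimately have "sorted_list_of_set A ! (c - 1) < sorted_list_of_set A ! (d - 1) \<longleftrightarrow> c - 1 < d - 1"
    by (rule strict_sorted_nth_less_iff)
  moreover have "c - 1 < d - 1 \<longleftrightarrow> c < d" using assms by auto
  ultimately show ?thesis by simp
qed

section \<open>The weight function as a product over nodes\<close>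

text \<open>A node \<open>(m, p)\<close> with \<open>p \<in> I\<^sub>1 \<union> \<dots> \<union> I\<^sub>m\<close> stands for \<open>t\<^sup>(\<^sup>m\<^sup>)\<^sub>c\<close> where \<open>p = i\<^sup>(\<^sup>m\<^sup>)\<^sub>c\<close>,
  and for \<open>z\<^sub>p\<close> at level \<open>N\<close>; \<open>pair_factor\<close> is the factor of \<open>U\<close> contributed by an ordered
  pair of nodes with values \<open>X\<close>, \<open>Y\<close>.\<close>

definition pair_factor :: "'a::field \<Rightarrow> nat \<Rightarrow> nat \<times> nat \<Rightarrow> nat \<times> nat \<Rightarrow> 'a \<Rightarrow> 'a \<Rightarrow> 'a" where
  "pair_factor h N v w X Y =
    (if fst v < N \<and> fst w = Suc (fst v) then
       (if snd w < snd v then 1 - h*Y/X else if snd v < snd w then 1 - Y/X else 1)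
     else if fst v < N \<and> fst w = fst v \<and> snd v < snd w then (1 - h*Y/X)/(1 - Y/X) else 1)"

definition nodes :: "nat \<Rightarrow> (nat \<Rightarrow> nat set) \<Rightarrow> (nat \<times> nat) set" where
  "nodes N J = Sigma {1..N} (upto_union J)"

definition node_prod :: "'a::field \<Rightarrow> nat \<Rightarrow> (nat \<times> nat) set \<Rightarrow> (nat \<times> nat \<Rightarrow> 'a) \<Rightarrow> 'a" where
  "node_prod h N V y = (\<Prod>v\<in>V. \<Prod>w\<in>V. pair_factor h N v w (y v) (y w))"

lemma prod_Sigma_split:
  "finite A \<Longrightarrow> (\<And>x. x \<in> A \<Longrightarrow> finite (B x)) \<Longrightarrow>
   (\<Prod>v\<in>Sigma A B. G v) = (\<Prod>x\<in>A. \<Prod>y\<in>B x. G (x,y))"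
  by (simp add: prod.Sigma split_def)

lemma prod_if_if:
  assumes "finite A" "\<And>x. \<not> (P x \<and> Q x)"
  shows "(\<Prod>x\<in>A. if P x then f x else if Q x then g x else 1)
       = (\<Prod>x\<in>{x\<in>A. P x}. f x) * (\<Prod>x\<in>{x\<in>A. Q x}. g x)"
proof -
  have "(\<Prod>x\<in>A. if P x then f x else if Q x then g x else 1)
      = (\<Prod>x\<in>A. (if P x then f x else 1) * (if Q x then g x else 1))"
    using assms(2) by (intro prod.cong) auto
  also have "\<dots> = (\<Prod>x\<in>A. if P x then f x else 1) * (\<Prod>x\<in>A. if Q x then g x else 1)"
    by (rule prod.distrib)
  also have "\<dots> = (\<Prod>x\<in>{x\<in>A. P x}. f x) * (\<Prod>x\<in>{x\<in>A. Q x}. g x)"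
    using assms(1) by (simp add: prod.inter_filter)
  finally show ?thesis .
qed

lemma pidx_bij:
  assumes "finite (upto_union J m)"
  shows "bij_betw (pidx J m) {1..card (upto_union J m)} (upto_union J m)"
  unfolding pidx_eq_nth[abs_def] using bij_betw_sorted_list_nth[OF assms] by simp

definition rank :: "(nat \<Rightarrow> nat set) \<Rightarrow> nat \<Rightarrow> nat \<Rightarrow> nat" where
  "rank J m = inv_into {1..card (upto_union J m)} (pidx J m)"

lemma rank_pidx:
  assumes "finite (upto_union J m)" "c \<in> {1..card (upto_union J m)}"
  shows "rank J m (pidx J m c) = c"
  unfolding rank_def using bij_betw_inv_into_left[OF pidx_bij[OF assms(1)] assms(2)] .

lemma pidx_rank:
  assumes "finite (upto_union J m)" "p \<in> upto_union J m"
  shows "pidx J m (rank J m p) = p"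
  unfolding rank_def using bij_betw_inv_into_right[OF pidx_bij[OF assms(1)] assms(2)] .

lemma rank_in:
  assumes "finite (upto_union J m)" "p \<in> upto_union J m"
  shows "rank J m p \<in> {1..card (upto_union J m)}"
  unfolding rank_def using bij_betwE[OF bij_betw_inv_into[OF pidx_bij[OF assms(1)]]] assms(2) by blast

lemma bij_betw_rank:
  assumes "finite (upto_union J m)"
  shows "bij_betw (rank J m) (upto_union J m) {1..card (upto_union J m)}"
  unfolding rank_def using bij_betw_inv_into[OF pidx_bij[OF assms(1)]] .

lemma pidx_less_iff:
  assumes "finite (upto_union J m)" "c \<in> {1..card (upto_union J m)}" "d \<in> {1..card (upto_union J m)}"
  shows "pidx J m c < pidx J m d \<longleftrightarrow> c < d"
  unfolding pidx_eq_nth using sorted_list_of_set_nth_less_iff[OF assms] .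

lemma node_prod_by_levels:
  assumes fin: "\<And>m. finite (upto_union J m)"
  shows "node_prod h N (nodes N J) y = (\<Prod>m\<in>{1..N-1}. \<Prod>p\<in>upto_union J m.
       (\<Prod>q\<in>upto_union J (Suc m). pair_factor h N (m,p) (Suc m,q) (y (m,p)) (y (Suc m,q)))
     * (\<Prod>q\<in>upto_union J m. pair_factor h N (m,p) (m,q) (y (m,p)) (y (m,q))))" (is "_ = ?R")
proof -
  define K where "K m p = (\<Prod>w\<in>nodes N J. pair_factor h N (m,p) w (y (m,p)) (y w))" for m p
  have NPK: "node_prod h N (nodes N J) y = (\<Prod>m\<in>{1..N}. \<Prod>p\<in>upto_union J m. K m p)"
    unfolding node_prod_def K_def nodes_def using fin by (simp add: prod_Sigma_split)
  have KS: "K m p = (\<Prod>m'\<in>{1..N}. \<Prod>q\<in>upto_union J m'. pair_factor h N (m,p) (m',q) (y (m,p)) (y (m',q)))" for m p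
    unfolding K_def nodes_def using fin by (simp add: prod_Sigma_split)
  have KN: "K N p = 1" for p unfolding KS pair_factor_def by simp
  have Km: "K m p = (\<Prod>q\<in>upto_union J (Suc m). pair_factor h N (m,p) (Suc m,q) (y (m,p)) (y (Suc m,q)))
     * (\<Prod>q\<in>upto_union J m. pair_factor h N (m,p) (m,q) (y (m,p)) (y (m,q)))" if m: "m \<in> {1..N-1}" for m p
  proof -
    have "K m p = (\<Prod>m'\<in>{m, Suc m}. \<Prod>q\<in>upto_union J m'. pair_factor h N (m,p) (m',q) (y (m,p)) (y (m',q)))"
      unfolding KS
    proof (rule prod.mono_neutral_right)
      show "{m, Suc m} \<subseteq> {1..N}" using m by auto
      show "\<forall>i\<in>{1..N} - {m, Suc m}. (\<Prod>q\<in>upto_union J i. pair_factor h N (m,p) (i,q) (y (m,p)) (y (i,q))) = 1"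
        by (auto simp: pair_factor_def)
    qed simp
    also have "\<dots> = (\<Prod>q\<in>upto_union J (Suc m). pair_factor h N (m,p) (Suc m,q) (y (m,p)) (y (Suc m,q)))
     * (\<Prod>q\<in>upto_union J m. pair_factor h N (m,p) (m,q) (y (m,p)) (y (m,q)))" by (simp add: mult.commute)
    finally show ?thesis .
  qed
  show ?thesis
  proof (cases "N = 0")
    case True then show ?thesis unfolding NPK by simp
  next
    case False
    then have e: "{1..N} = insert N {1..N-1}" by auto
    have "node_prod h N (nodes N J) y = (\<Prod>m\<in>{1..N-1}. \<Prod>p\<in>upto_union J m. K m p)"
      unfolding NPK e using KN by (subst prod.insert) auto
    also have "\<dots> = ?R" by (intro prod.cong refl) (simp add: Km)
    finally show ?thesis .
  qed
qed

lemma prod_pair_factor_level: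
  assumes fin: "finite (upto_union J m)" and cm: "card (upto_union J m) = lsum lam m"
    and mN: "m < N" and a: "a \<in> {1..lsum lam m}"
  shows "(\<Prod>c\<in>{1..lsum lam (Suc m)}. pair_factor h N (m,pidx J m a) (Suc m,pidx J (Suc m) c) (tv m a) (tv (Suc m) c))
     * (\<Prod>b\<in>{1..lsum lam m}. pair_factor h N (m,pidx J m a) (m,pidx J m b) (tv m a) (tv m b))
   = (\<Prod>c\<in>{c\<in>{1..lsum lam (m+1)}. pidx J (m+1) c < pidx J m a}. 1 - h * tv (m+1) c / tv m a)
      * (\<Prod>c\<in>{c\<in>{1..lsum lam (m+1)}. pidx J (m+1) c > pidx J m a}. 1 - tv (m+1) c / tv m a)
      * (\<Prod>b\<in>{a+1..lsum lam m}. (1 - h * tv m b / tv m a) / (1 - tv m b / tv m a))"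
proof -
  have "(\<Prod>b\<in>{1..lsum lam m}. pair_factor h N (m,pidx J m a) (m,pidx J m b) (tv m a) (tv m b))
      = (\<Prod>b\<in>{1..lsum lam m}. if a < b then (1 - h * tv m b / tv m a) / (1 - tv m b / tv m a) else 1)"
  proof (rule prod.cong[OF refl])
    fix b assume "b \<in> {1..lsum lam m}"
    then have "pidx J m a < pidx J m b \<longleftrightarrow> a < b"
      using pidx_less_iff[OF fin] a cm by simp
    then show "pair_factor h N (m,pidx J m a) (m,pidx J m b) (tv m a) (tv m b)
      = (if a < b then (1 - h * tv m b / tv m a) / (1 - tv m b / tv m a) else 1)"
      unfolding pair_factor_def using mN by simp
  qed
  also have "\<dots> = (\<Prod>b\<in>{a+1..lsum lam m}. (1 - h * tv m b / tv m a) / (1 - tv m b / tv m a))"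
    by (subst prod.inter_filter[symmetric]) (auto intro!: prod.cong)
  moreover have "(\<Prod>c\<in>{1..lsum lam (Suc m)}. pair_factor h N (m,pidx J m a) (Suc m,pidx J (Suc m) c) (tv m a) (tv (Suc m) c))
      = (\<Prod>c\<in>{c\<in>{1..lsum lam (m+1)}. pidx J (m+1) c < pidx J m a}. 1 - h * tv (m+1) c / tv m a)
      * (\<Prod>c\<in>{c\<in>{1..lsum lam (m+1)}. pidx J (m+1) c > pidx J m a}. 1 - tv (m+1) c / tv m a)"
    unfolding pair_factor_def using mN by (simp add: prod_if_if)
  ultimately show ?thesis by simp
qed

lemma prod_level_reindex:
  assumes "bij_betw g {1..A} P" "bij_betw g' {1..B} Q"
  shows "(\<Prod>p\<in>P. (\<Prod>q\<in>Q. F p q) * (\<Prod>q\<in>P. G p q))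
     = (\<Prod>a\<in>{1..A}. (\<Prod>c\<in>{1..B}. F (g a) (g' c)) * (\<Prod>b\<in>{1..A}. G (g a) (g b)))"
  by (simp add: prod.reindex_bij_betw[OF assms(1), symmetric] prod.reindex_bij_betw[OF assms(2), symmetric])

lemma Ufun_eq_node_prod:
  assumes fin: "\<And>m. finite (upto_union J m)"
    and card: "\<And>m. m \<in> {1..N} \<Longrightarrow> card (upto_union J m) = lsum lam m"
  shows "Ufun N lam J t' z h = node_prod h N (nodes N J) (\<lambda>(m,p). tvar N t' z m (rank J m p))"
proof -
  define y where "y = (\<lambda>(m,p). tvar N t' z m (rank J m p))"
  define tv where "tv = tvar N t' z"
  have bij: "bij_betw (pidx J m) {1..lsum lam m} (upto_union J m)" if "m \<in> {1..N}" for m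
    using pidx_bij[OF fin, of m] card[OF that] by simp
  have y_pidx: "y (m, pidx J m c) = tv m c" if "m \<in> {1..N}" "c \<in> {1..lsum lam m}" for m c
    using rank_pidx[OF fin, of c m] that card[OF that(1)] by (simp add: y_def tv_def)
  have level: "(\<Prod>a\<in>{1..lsum lam m}.
        (\<Prod>c\<in>{c\<in>{1..lsum lam (m+1)}. pidx J (m+1) c < pidx J m a}. 1 - h * tv (m+1) c / tv m a)
      * (\<Prod>c\<in>{c\<in>{1..lsum lam (m+1)}. pidx J (m+1) c > pidx J m a}. 1 - tv (m+1) c / tv m a)
      * (\<Prod>b\<in>{a+1..lsum lam m}. (1 - h * tv m b / tv m a) / (1 - tv m b / tv m a)))
    = (\<Prod>p\<in>upto_union J m.
       (\<Prod>q\<in>upto_union J (Suc m). pair_factor h N (m,p) (Suc m,q) (y (m,p)) (y (Suc m,q)))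
     * (\<Prod>q\<in>upto_union J m. pair_factor h N (m,p) (m,q) (y (m,p)) (y (m,q))))"
    if m: "m \<in> {1..N-1}" for m
  proof -
    have m1: "m \<in> {1..N}" "Suc m \<in> {1..N}" and "m < N" using m by auto
    show ?thesis
      unfolding prod_level_reindex[OF bij[OF m1(1)] bij[OF m1(2)]]
    proof (rule prod.cong[OF refl])
      fix a assume a: "a \<in> {1..lsum lam m}"
      have "(\<Prod>c\<in>{1..lsum lam (Suc m)}. pair_factor h N (m,pidx J m a) (Suc m,pidx J (Suc m) c) (y (m,pidx J m a)) (y (Suc m,pidx J (Suc m) c)))
          = (\<Prod>c\<in>{1..lsum lam (Suc m)}. pair_factor h N (m,pidx J m a) (Suc m,pidx J (Suc m) c) (tv m a) (tv (Suc m) c))"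
        "(\<Prod>b\<in>{1..lsum lam m}. pair_factor h N (m,pidx J m a) (m,pidx J m b) (y (m,pidx J m a)) (y (m,pidx J m b)))
          = (\<Prod>b\<in>{1..lsum lam m}. pair_factor h N (m,pidx J m a) (m,pidx J m b) (tv m a) (tv m b))"
        using a m1 by (auto simp: y_pidx intro!: prod.cong)
      then show "(\<Prod>c\<in>{c\<in>{1..lsum lam (m+1)}. pidx J (m+1) c < pidx J m a}. 1 - h * tv (m+1) c / tv m a)
          * (\<Prod>c\<in>{c\<in>{1..lsum lam (m+1)}. pidx J (m+1) c > pidx J m a}. 1 - tv (m+1) c / tv m a)
          * (\<Prod>b\<in>{a+1..lsum lam m}. (1 - h * tv m b / tv m a) / (1 - tv m b / tv m a))
        = (\<Prod>c\<in>{1..lsum lam (Suc m)}. pair_factor h N (m,pidx J m a) (Suc m,pidx J (Suc m) c) (y (m,pidx J m a)) (y (Suc m,pidx J (Suc m) c)))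
          * (\<Prod>b\<in>{1..lsum lam m}. pair_factor h N (m,pidx J m a) (m,pidx J m b) (y (m,pidx J m a)) (y (m,pidx J m b)))"
        using prod_pair_factor_level[OF fin card[OF m1(1)] \<open>m < N\<close> a, of h tv] by simp
    qed
  qed
  have "Ufun N lam J t' z h = (\<Prod>m\<in>{1..N-1}. \<Prod>p\<in>upto_union J m.
       (\<Prod>q\<in>upto_union J (Suc m). pair_factor h N (m,p) (Suc m,q) (y (m,p)) (y (Suc m,q)))
     * (\<Prod>q\<in>upto_union J m. pair_factor h N (m,p) (m,q) (y (m,p)) (y (m,q))))"
    unfolding Ufun_def tv_def[symmetric] by (rule prod.cong[OF refl]) (rule level)
  also have "\<dots> = node_prod h N (nodes N J) y" by (rule node_prod_by_levels[OF fin, symmetric])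
  finally show ?thesis by (simp add: y_def)
qed

definition node_vars :: "nat \<Rightarrow> (nat \<Rightarrow> nat set) \<Rightarrow> (nat \<Rightarrow> nat \<Rightarrow> 'a::field) \<Rightarrow> (nat \<Rightarrow> 'a)
   \<Rightarrow> (nat \<Rightarrow> nat \<Rightarrow> nat) \<Rightarrow> nat \<times> nat \<Rightarrow> 'a" where
  "node_vars N J t u \<rho> = (\<lambda>(m,p). tvar N (\<lambda>k a. t k (\<rho> k a)) u m (rank J m p))"

lemma Wfun_eq_sum_node_prod:
  assumes fin: "\<And>m. finite (upto_union J m)"
    and card: "\<And>m. m \<in> {1..N} \<Longrightarrow> card (upto_union J m) = lsum lam m"
  shows "Wfun N lam J t u h = (1 - h) ^ (\<Sum>k=1..N-1. lsum lam k)
     * (\<Sum>\<rho>\<in>symperms N lam. node_prod h N (nodes N J) (node_vars N J t u \<rho>))"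
  unfolding Wfun_def node_vars_def by (intro arg_cong[where f="(*) _"] sum.cong refl Ufun_eq_node_prod[OF fin card])

lemma pidx_top:
  assumes "upto_union J N = {1..n}" "c \<in> {1..n}"
  shows "pidx J N c = c"
proof -
  have e: "sorted_list_of_set {1..n} = [1..<Suc n]"
    by (metis atLeastLessThanSuc_atLeastAtMost sorted_list_of_set_range)
  have "[1..<Suc n] ! (c - 1) = 1 + (c - 1)" by (rule nth_upt) (use assms in auto)
  then show ?thesis using assms(2) unfolding pidx_eq_nth assms(1) e by simp
qed

lemma rank_top:
  assumes "upto_union J N = {1..n}" "p \<in> {1..n}"
  shows "rank J N p = p"
proof -
  have "finite (upto_union J N)" "p \<in> {1..card (upto_union J N)}" using assms by auto
  from rank_pidx[OF this] show ?thesis using pidx_top[OF assms] by simp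
qed

lemma node_vars_top:
  assumes "upto_union J N = {1..n}" "p \<in> {1..n}"
  shows "node_vars N J t u \<rho> (N,p) = u p"
  using rank_top[OF assms] by (simp add: node_vars_def tvar_def)

lemma node_vars_below: "m \<noteq> N \<Longrightarrow> node_vars N J t u \<rho> (m,p) = t m (\<rho> m (rank J m p))"
  by (simp add: node_vars_def tvar_def)

lemma node_prod_cong: "(\<And>v. v \<in> V \<Longrightarrow> y v = y' v) \<Longrightarrow> node_prod h N V y = node_prod h N V y'"
  unfolding node_prod_def by (intro prod.cong refl) auto

lemma node_prod_image:
  assumes "inj_on S V"
  shows "node_prod h N (S ` V) y = (\<Prod>v\<in>V. \<Prod>w\<in>V. pair_factor h N (S v) (S w) (y (S v)) (y (S w)))"
proof -
  have "node_prod h N (S ` V) y = (\<Prod>v\<in>V. \<Prod>w\<in>S ` V. pair_factor h N (S v) w (y (S v)) (y w))"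
    unfolding node_prod_def by (rule prod.reindex[OF assms, unfolded comp_def])
  also have "\<dots> = (\<Prod>v\<in>V. \<Prod>w\<in>V. pair_factor h N (S v) (S w) (y (S v)) (y (S w)))"
    by (rule prod.cong[OF refl]) (rule prod.reindex[OF assms, unfolded comp_def])
  finally show ?thesis .
qed

definition compose_levels :: "nat \<Rightarrow> (nat \<Rightarrow> nat \<Rightarrow> nat) \<Rightarrow> (nat \<Rightarrow> nat \<Rightarrow> nat) \<Rightarrow> nat \<Rightarrow> nat \<Rightarrow> nat" where
  "compose_levels N \<tau> \<rho> = (\<lambda>m. if m \<in> {1..N-1} then \<rho> m \<circ> \<tau> m else id)"

lemma compose_levels_in_symperms:
  assumes "\<And>m. m \<in> {1..N-1} \<Longrightarrow> \<tau> m permutes {1..lsum lam m}" and "\<rho> \<in> symperms N lam"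
  shows "compose_levels N \<tau> \<rho> \<in> symperms N lam"
  using assms by (auto simp: compose_levels_def symperms_def intro!: permutes_compose)

lemma compose_levels_inv:
  assumes "\<And>m. m \<in> {1..N-1} \<Longrightarrow> \<tau> m permutes {1..lsum lam m}" and "\<rho> \<in> symperms N lam"
  shows "compose_levels N (\<lambda>m. inv (\<tau> m)) (compose_levels N \<tau> \<rho>) = \<rho>"
    and "compose_levels N \<tau> (compose_levels N (\<lambda>m. inv (\<tau> m)) \<rho>) = \<rho>"
  using assms permutes_inv_o[OF assms(1)]
  by (auto simp: fun_eq_iff compose_levels_def symperms_def o_assoc[symmetric])

lemma sum_symperms_compose_levels:
  assumes perm: "\<And>m. m \<in> {1..N-1} \<Longrightarrow> \<tau> m permutes {1..lsum lam m}"
  shows "(\<Sum>\<rho>\<in>symperms N lam. g \<rho>) = (\<Sum>\<rho>\<in>symperms N lam. g (compose_levels N \<tau> \<rho>))"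
proof -
  have perm_inv: "\<And>m. m \<in> {1..N-1} \<Longrightarrow> inv (\<tau> m) permutes {1..lsum lam m}"
    using perm by (rule permutes_inv)
  have "bij_betw (compose_levels N \<tau>) (symperms N lam) (symperms N lam)"
  proof (rule bij_betw_byWitness[where f' = "compose_levels N (\<lambda>m. inv (\<tau> m))"])
    show "\<forall>\<rho>\<in>symperms N lam. compose_levels N (\<lambda>m. inv (\<tau> m)) (compose_levels N \<tau> \<rho>) = \<rho>"
      using compose_levels_inv(1)[OF perm] by blast
    show "\<forall>\<rho>\<in>symperms N lam. compose_levels N \<tau> (compose_levels N (\<lambda>m. inv (\<tau> m)) \<rho>) = \<rho>"
      using compose_levels_inv(2)[OF perm] by blast
  qed (use compose_levels_in_symperms[OF perm] compose_levels_in_symperms[OF perm_inv] in auto)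
  then show ?thesis by (rule sum.reindex_bij_betw[symmetric])
qed

section \<open>Two strands\<close>

definition strand_nodes :: "(nat \<times> nat) set \<Rightarrow> nat \<Rightarrow> (nat \<times> nat) set" where
  "strand_nodes V a = {v\<in>V. snd v \<in> {a, Suc a}}"

definition off_strand_prod :: "'a::field \<Rightarrow> nat \<Rightarrow> (nat \<times> nat) set \<Rightarrow> nat \<Rightarrow> (nat \<times> nat \<Rightarrow> 'a) \<Rightarrow> 'a" where
  "off_strand_prod h N V a y = (\<Prod>x\<in>V \<times> V - strand_nodes V a \<times> strand_nodes V a. pair_factor h N (fst x) (snd x) (y (fst x)) (y (snd x)))"

definition strand_prod :: "'a::field \<Rightarrow> nat \<Rightarrow> (nat \<times> nat) set \<Rightarrow> nat \<Rightarrow> (nat \<times> nat \<Rightarrow> 'a) \<Rightarrow> 'a" where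
  "strand_prod h N V a y = (\<Prod>v\<in>strand_nodes V a. \<Prod>w\<in>strand_nodes V a. pair_factor h N v w (y v) (y w))"

definition swap_node :: "nat \<Rightarrow> nat \<times> nat \<Rightarrow> nat \<times> nat" where
  "swap_node a v = (fst v, transpose a (Suc a) (snd v))"

text \<open>\<open>U\<close> after exchanging \<open>a\<close> and \<open>a + 1\<close> in the partition, written on the original nodes.\<close>

definition swapped_node_prod :: "'a::field \<Rightarrow> nat \<Rightarrow> (nat \<times> nat) set \<Rightarrow> nat \<Rightarrow> (nat \<times> nat \<Rightarrow> 'a) \<Rightarrow> 'a" where
  "swapped_node_prod h N V a y = (\<Prod>v\<in>V. \<Prod>w\<in>V. pair_factor h N (swap_node a v) (swap_node a w) (y v) (y w))"

definition swapped_strand_prod :: "'a::field \<Rightarrow> nat \<Rightarrow> (nat \<times> nat) set \<Rightarrow> nat \<Rightarrow> (nat \<times> nat \<Rightarrow> 'a) \<Rightarrow> 'a" where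
  "swapped_strand_prod h N V a y = (\<Prod>v\<in>strand_nodes V a. \<Prod>w\<in>strand_nodes V a. pair_factor h N (swap_node a v) (swap_node a w) (y v) (y w))"

definition swap_levels :: "nat set \<Rightarrow> nat \<Rightarrow> nat \<times> nat \<Rightarrow> nat \<times> nat" where
  "swap_levels E a v = (fst v, if fst v \<in> E then transpose a (Suc a) (snd v) else snd v)"

lemma prod_pairs_split:
  assumes "finite V" "L \<subseteq> V"
  shows "(\<Prod>v\<in>V. \<Prod>w\<in>V. F v w) = (\<Prod>v\<in>L. \<Prod>w\<in>L. F v w) * (\<Prod>x\<in>V \<times> V - L \<times> L. F (fst x) (snd x))"
proof -
  have fL: "finite L" using assms finite_subset by blast
  have "(\<Prod>v\<in>V. \<Prod>w\<in>V. F v w) = (\<Prod>x\<in>V \<times> V. F (fst x) (snd x))"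
    by (simp add: prod.cartesian_product split_def)
  also have "\<dots> = (\<Prod>x\<in>V \<times> V - L \<times> L. F (fst x) (snd x)) * (\<Prod>x\<in>L \<times> L. F (fst x) (snd x))"
    by (rule prod.subset_diff) (use assms in auto)
  also have "(\<Prod>x\<in>L \<times> L. F (fst x) (snd x)) = (\<Prod>v\<in>L. \<Prod>w\<in>L. F v w)"
    by (simp add: prod.cartesian_product split_def)
  finally show ?thesis by (simp add: mult.commute)
qed

lemma transpose_Suc_cases:
  "p \<notin> {a, Suc a} \<Longrightarrow> transpose a (Suc a) p = p"
  "p \<in> {a, Suc a} \<Longrightarrow> transpose a (Suc a) p \<in> {a, Suc a}"
  by (auto simp: transpose_def)

lemma pair_factor_local_swap:
  assumes "fst v' = fst v" "fst w' = fst w"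
    and "snd v \<notin> {a, Suc a} \<Longrightarrow> snd v' = snd v" "snd v \<in> {a, Suc a} \<Longrightarrow> snd v' \<in> {a, Suc a}"
    and "snd w \<notin> {a, Suc a} \<Longrightarrow> snd w' = snd w" "snd w \<in> {a, Suc a} \<Longrightarrow> snd w' \<in> {a, Suc a}"
    and "\<not> (snd v \<in> {a, Suc a} \<and> snd w \<in> {a, Suc a})"
  shows "pair_factor h N v' w' = pair_factor h N v w"
proof -
  have c1: "snd w' < snd v' \<longleftrightarrow> snd w < snd v" and c2: "snd v' < snd w' \<longleftrightarrow> snd v < snd w"
  proof -
    have "(snd w' < snd v' \<longleftrightarrow> snd w < snd v) \<and> (snd v' < snd w' \<longleftrightarrow> snd v < snd w)"
    proof (cases "snd v \<in> {a, Suc a}")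
      case True
      then have "snd w \<notin> {a, Suc a}" using assms(7) by blast
      then show ?thesis using True assms(3-6) by auto
    next
      case False
      then show ?thesis using assms(3-6) by (cases "snd w \<in> {a, Suc a}") auto
    qed
    then show "snd w' < snd v' \<longleftrightarrow> snd w < snd v" "snd v' < snd w' \<longleftrightarrow> snd v < snd w" by auto
  qed
  show ?thesis by (intro ext) (simp add: pair_factor_def assms(1,2) c1 c2)
qed

lemma node_prod_split:
  assumes "finite V"
  shows "node_prod h N V y = strand_prod h N V a y * off_strand_prod h N V a y"
  unfolding node_prod_def strand_prod_def off_strand_prod_def
  by (rule prod_pairs_split) (use assms in \<open>auto simp: strand_nodes_def\<close>)

lemma swapped_node_prod_split:
  assumes "finite V"
  shows "swapped_node_prod h N V a y = swapped_strand_prod h N V a y * off_strand_prod h N V a y"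
proof -
  have "swapped_node_prod h N V a y = swapped_strand_prod h N V a y *
     (\<Prod>x\<in>V \<times> V - strand_nodes V a \<times> strand_nodes V a. pair_factor h N (swap_node a (fst x)) (swap_node a (snd x)) (y (fst x)) (y (snd x)))"
    unfolding swapped_node_prod_def swapped_strand_prod_def
    by (rule prod_pairs_split) (use assms in \<open>auto simp: strand_nodes_def\<close>)
  also have "(\<Prod>x\<in>V \<times> V - strand_nodes V a \<times> strand_nodes V a. pair_factor h N (swap_node a (fst x)) (swap_node a (snd x)) (y (fst x)) (y (snd x)))
     = off_strand_prod h N V a y"
    unfolding off_strand_prod_def
  proof (rule prod.cong[OF refl])
    fix x assume x: "x \<in> V \<times> V - strand_nodes V a \<times> strand_nodes V a"
    have "pair_factor h N (swap_node a (fst x)) (swap_node a (snd x)) = pair_factor h N (fst x) (snd x)"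
      by (rule pair_factor_local_swap) (use x in \<open>auto simp: swap_node_def strand_nodes_def transpose_Suc_cases\<close>)
    then show "pair_factor h N (swap_node a (fst x)) (swap_node a (snd x)) (y (fst x)) (y (snd x))
      = pair_factor h N (fst x) (snd x) (y (fst x)) (y (snd x))" by simp
  qed
  finally show ?thesis .
qed

lemma image_strand_nodes:
  assumes "T ` V = V"
    and "\<And>v. snd v \<notin> {a, Suc a} \<Longrightarrow> snd (T v) = snd v"
    and "\<And>v. snd v \<in> {a, Suc a} \<Longrightarrow> snd (T v) \<in> {a, Suc a}"
  shows "T ` strand_nodes V a = strand_nodes V a"
proof
  show "T ` strand_nodes V a \<subseteq> strand_nodes V a"
  proof
    fix w assume "w \<in> T ` strand_nodes V a"
    then obtain u where u: "u \<in> V" "snd u \<in> {a, Suc a}" "w = T u" by (auto simp: strand_nodes_def)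
    moreover have "T u \<in> V" using u(1) assms(1) by blast
    ultimately show "w \<in> strand_nodes V a" using assms(3)[OF u(2)] by (simp add: strand_nodes_def)
  qed
  show "strand_nodes V a \<subseteq> T ` strand_nodes V a"
  proof
    fix w assume w: "w \<in> strand_nodes V a"
    then have "w \<in> T ` V" using assms(1) by (simp add: strand_nodes_def)
    then obtain u where u: "u \<in> V" "w = T u" by blast
    have "snd u \<in> {a, Suc a}"
    proof (rule ccontr)
      assume "snd u \<notin> {a, Suc a}"
      then have "snd w \<notin> {a, Suc a}" using assms(2) u(2) by simp
      then show False using w by (simp add: strand_nodes_def)
    qed
    then show "w \<in> T ` strand_nodes V a" using u by (auto simp: strand_nodes_def)
  qed
qed

lemma off_strand_prod_invariant:
  assumes TV: "T ` V = V" and inj: "inj_on T V"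
    and f: "\<And>v. fst (T v) = fst v"
    and p1: "\<And>v. snd v \<notin> {a, Suc a} \<Longrightarrow> snd (T v) = snd v"
    and p2: "\<And>v. snd v \<in> {a, Suc a} \<Longrightarrow> snd (T v) \<in> {a, Suc a}"
  shows "off_strand_prod h N V a (y \<circ> T) = off_strand_prod h N V a y"
proof -
  define L where "L = strand_nodes V a"
  define R where "R = V \<times> V - L \<times> L"
  define PT where "PT = map_prod T T"
  have LV: "L \<subseteq> V" by (auto simp: L_def strand_nodes_def)
  have TL: "T ` L = L" unfolding L_def by (rule image_strand_nodes[OF TV p1 p2])
  have injP: "inj_on PT (V \<times> V)" using inj by (auto simp: PT_def inj_on_def)
  have PR: "PT ` R = R"
  proof -
    have "PT ` R = PT ` (V \<times> V) - PT ` (L \<times> L)"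
      unfolding R_def by (rule inj_on_image_set_diff[OF injP]) (use LV in auto)
    also have "PT ` (V \<times> V) = V \<times> V" unfolding PT_def using TV by (simp add: map_prod_surj_on)
    also have "PT ` (L \<times> L) = L \<times> L" unfolding PT_def using TL by (simp add: map_prod_surj_on)
    finally show ?thesis by (simp add: R_def)
  qed
  have injR: "inj_on PT R" using injP by (rule inj_on_subset) (auto simp: R_def)
  have "off_strand_prod h N V a y = (\<Prod>x\<in>PT ` R. pair_factor h N (fst x) (snd x) (y (fst x)) (y (snd x)))"
    unfolding off_strand_prod_def PR by (simp add: R_def L_def)
  also have "\<dots> = (\<Prod>x\<in>R. pair_factor h N (T (fst x)) (T (snd x)) (y (T (fst x))) (y (T (snd x))))"
    by (subst prod.reindex[OF injR]) (simp add: PT_def comp_def case_prod_beta)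
  also have "\<dots> = (\<Prod>x\<in>R. pair_factor h N (fst x) (snd x) (y (T (fst x))) (y (T (snd x))))"
  proof (rule prod.cong[OF refl])
    fix x assume x: "x \<in> R"
    have x3: "\<not> (snd (fst x) \<in> {a, Suc a} \<and> snd (snd x) \<in> {a, Suc a})"
      using x by (cases x) (auto simp: R_def L_def strand_nodes_def)
    have "pair_factor h N (T (fst x)) (T (snd x)) = pair_factor h N (fst x) (snd x)"
      by (rule pair_factor_local_swap[OF f f p1 p2 p1 p2 x3])
    then show "pair_factor h N (T (fst x)) (T (snd x)) (y (T (fst x))) (y (T (snd x)))
       = pair_factor h N (fst x) (snd x) (y (T (fst x))) (y (T (snd x)))" by simp
  qed
  also have "\<dots> = off_strand_prod h N V a (y \<circ> T)" by (simp add: off_strand_prod_def R_def L_def)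
  finally show ?thesis by simp
qed

lemma swap_levels_swap_levels: "swap_levels E a (swap_levels E a v) = v"
  by (simp add: swap_levels_def)

lemma swap_levels_simps:
  "fst (swap_levels E a v) = fst v"
  "snd v \<notin> {a, Suc a} \<Longrightarrow> snd (swap_levels E a v) = snd v"
  "snd v \<in> {a, Suc a} \<Longrightarrow> snd (swap_levels E a v) \<in> {a, Suc a}"
  by (auto simp: swap_levels_def transpose_def)

lemma inj_on_swap_levels: "inj_on (swap_levels E a) V"
  by (metis swap_levels_swap_levels inj_on_inverseI)

lemma swap_levels_image:
  assumes "\<And>m. m \<in> E \<Longrightarrow> (a \<in> upto_union J m \<longleftrightarrow> Suc a \<in> upto_union J m)"
  shows "swap_levels E a ` nodes N J = nodes N J"
proof -
  have sub: "swap_levels E a ` nodes N J \<subseteq> nodes N J"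
  proof
    fix v assume "v \<in> swap_levels E a ` nodes N J"
    then obtain u where u: "u \<in> nodes N J" "v = swap_levels E a u" by auto
    show "v \<in> nodes N J"
      using u assms[of "fst u"] by (cases u) (auto simp: swap_levels_def nodes_def transpose_def)
  qed
  moreover have "nodes N J \<subseteq> swap_levels E a ` nodes N J"
  proof
    fix v assume "v \<in> nodes N J"
    then have "swap_levels E a v \<in> nodes N J" using sub by auto
    then show "v \<in> swap_levels E a ` nodes N J" using swap_levels_swap_levels[of E a v] by (metis image_eqI)
  qed
  ultimately show ?thesis by blast
qed

lemma swapped_node_prod_cong: "(\<And>v. v \<in> V \<Longrightarrow> y v = y' v) \<Longrightarrow> swapped_node_prod h N V a y = swapped_node_prod h N V a y'"
  unfolding swapped_node_prod_def by (intro prod.cong refl) auto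

lemma prod_prod_image:
  assumes "inj_on S L"
  shows "(\<Prod>v\<in>S ` L. \<Prod>w\<in>S ` L. G v w) = (\<Prod>v\<in>L. \<Prod>w\<in>L. G (S v) (S w))"
proof -
  have "(\<Prod>v\<in>S ` L. \<Prod>w\<in>S ` L. G v w) = (\<Prod>v\<in>L. \<Prod>w\<in>S ` L. G (S v) w)"
    by (rule prod.reindex[OF assms, unfolded comp_def])
  also have "\<dots> = (\<Prod>v\<in>L. \<Prod>w\<in>L. G (S v) (S w))"
    by (rule prod.cong[OF refl]) (rule prod.reindex[OF assms, unfolded comp_def])
  finally show ?thesis .
qed

lemma swap_node_swap_node: "swap_node a (swap_node a v) = v"
  by (simp add: swap_node_def)

lemma inj_on_swap_node: "inj_on (swap_node a) V"
  by (metis swap_node_swap_node inj_on_inverseI)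

lemma swap_levels_insert_top:
  assumes "N \<notin> E"
  shows "swap_levels E a (swap_levels {N} a v) = swap_levels (insert N E) a v"
  using assms by (cases v) (auto simp: swap_levels_def)

lemma rank_transpose:
  assumes fin: "finite (upto_union J m)" and "a \<in> upto_union J m" "Suc a \<in> upto_union J m" "p \<in> upto_union J m"
  shows "transpose (rank J m a) (rank J m (Suc a)) (rank J m p) = rank J m (transpose a (Suc a) p)"
proof -
  have inj: "inj_on (rank J m) (upto_union J m)" using bij_betw_rank[OF fin] by (simp add: bij_betw_def)
  show ?thesis
  proof (cases "p = a \<or> p = Suc a")
    case True then show ?thesis by auto
  next
    case False
    then have "rank J m p \<noteq> rank J m a" "rank J m p \<noteq> rank J m (Suc a)"
      using inj assms by (auto dest: inj_onD)
    then show ?thesis using False by (simp add: transpose_def)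
  qed
qed

definition swap_ranks :: "(nat \<Rightarrow> nat set) \<Rightarrow> nat set \<Rightarrow> nat \<Rightarrow> nat \<Rightarrow> nat \<Rightarrow> nat" where
  "swap_ranks J E a m = (if m \<in> E then transpose (rank J m a) (rank J m (Suc a)) else id)"

lemma swap_ranks_permutes:
  assumes fin: "\<And>m. finite (upto_union J m)"
    and card: "\<And>m. m \<in> {1..N} \<Longrightarrow> card (upto_union J m) = lsum lam m"
    and both: "\<And>m. m \<in> E \<Longrightarrow> a \<in> upto_union J m \<and> Suc a \<in> upto_union J m"
    and m: "m \<in> {1..N-1}"
  shows "swap_ranks J E a m permutes {1..lsum lam m}"
proof (cases "m \<in> E")
  case True
  have "rank J m a \<in> {1..card (upto_union J m)}" "rank J m (Suc a) \<in> {1..card (upto_union J m)}"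
    using rank_in[OF fin] both[OF True] by auto
  moreover have "card (upto_union J m) = lsum lam m" using card m by auto
  ultimately show ?thesis using True by (simp add: swap_ranks_def permutes_swap_id)
qed (simp add: swap_ranks_def permutes_id)

lemma node_vars_compose_swap_ranks:
  assumes fin: "\<And>m. finite (upto_union J m)"
    and E: "E \<subseteq> {1..N-1}"
    and both: "\<And>m. m \<in> E \<Longrightarrow> a \<in> upto_union J m \<and> Suc a \<in> upto_union J m"
    and v: "v \<in> nodes N J"
  shows "node_vars N J t u (compose_levels N (swap_ranks J E a) \<rho>) v = node_vars N J t u \<rho> (swap_levels E a v)"
proof -
  obtain m p where vmp: "v = (m,p)" and m: "m \<in> {1..N}" and p: "p \<in> upto_union J m"
    using v by (auto simp: nodes_def)
  show ?thesis
  proof (cases "m \<in> E")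
    case True
    then have "swap_ranks J E a m (rank J m p) = rank J m (transpose a (Suc a) p)"
      using rank_transpose[OF fin _ _ p] both by (simp add: swap_ranks_def)
    then show ?thesis using True E by (auto simp: vmp node_vars_def tvar_def swap_levels_def compose_levels_def)
  next
    case False
    then show ?thesis using m
      by (auto simp: vmp node_vars_def tvar_def swap_levels_def compose_levels_def swap_ranks_def)
  qed
qed

lemma sum_symperms_swap_levels:
  assumes fin: "\<And>m. finite (upto_union J m)"
    and card: "\<And>m. m \<in> {1..N} \<Longrightarrow> card (upto_union J m) = lsum lam m"
    and E: "E \<subseteq> {1..N-1}"
    and both: "\<And>m. m \<in> E \<Longrightarrow> a \<in> upto_union J m \<and> Suc a \<in> upto_union J m"
    and resp: "\<And>y y'. (\<And>v. v \<in> nodes N J \<Longrightarrow> y v = y' v) \<Longrightarrow> G y = G y'"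
  shows "(\<Sum>\<rho>\<in>symperms N lam. G (node_vars N J t u \<rho>)) = (\<Sum>\<rho>\<in>symperms N lam. G (node_vars N J t u \<rho> \<circ> swap_levels E a))"
proof -
  have "(\<Sum>\<rho>\<in>symperms N lam. G (node_vars N J t u \<rho>))
      = (\<Sum>\<rho>\<in>symperms N lam. G (node_vars N J t u (compose_levels N (swap_ranks J E a) \<rho>)))"
    by (rule sum_symperms_compose_levels[OF swap_ranks_permutes[OF fin card both]])
  also have "\<dots> = (\<Sum>\<rho>\<in>symperms N lam. G (node_vars N J t u \<rho> \<circ> swap_levels E a))"
    by (intro sum.cong refl resp) (simp add: node_vars_compose_swap_ranks[OF fin E both])
  finally show ?thesis .
qed

lemma card_Pow_mult_sum_symperms:
  assumes fin: "\<And>m. finite (upto_union J m)"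
    and card: "\<And>m. m \<in> {1..N} \<Longrightarrow> card (upto_union J m) = lsum lam m"
    and B: "B \<subseteq> {1..N-1}"
    and both: "\<And>m. m \<in> B \<Longrightarrow> a \<in> upto_union J m \<and> Suc a \<in> upto_union J m"
    and resp: "\<And>y y'. (\<And>v. v \<in> nodes N J \<Longrightarrow> y v = y' v) \<Longrightarrow> G y = G y'"
  shows "of_nat (card (Pow B)) * (\<Sum>\<rho>\<in>symperms N lam. G (node_vars N J t u \<rho>))
       = (\<Sum>\<rho>\<in>symperms N lam. \<Sum>E\<in>Pow B. G (node_vars N J t u \<rho> \<circ> swap_levels E a))"
proof -
  have "(\<Sum>\<rho>\<in>symperms N lam. \<Sum>E\<in>Pow B. G (node_vars N J t u \<rho> \<circ> swap_levels E a))
      = (\<Sum>E\<in>Pow B. \<Sum>\<rho>\<in>symperms N lam. G (node_vars N J t u \<rho> \<circ> swap_levels E a))"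
    by (rule sum.swap)
  also have "\<dots> = (\<Sum>E\<in>Pow B. \<Sum>\<rho>\<in>symperms N lam. G (node_vars N J t u \<rho>))"
  proof (rule sum.cong[OF refl])
    fix E assume "E \<in> Pow B"
    then have "E \<subseteq> {1..N-1}" "\<And>m. m \<in> E \<Longrightarrow> a \<in> upto_union J m \<and> Suc a \<in> upto_union J m"
      using B both by auto
    from sum_symperms_swap_levels[OF fin card this resp]
    show "(\<Sum>\<rho>\<in>symperms N lam. G (node_vars N J t u \<rho> \<circ> swap_levels E a)) = (\<Sum>\<rho>\<in>symperms N lam. G (node_vars N J t u \<rho>))"
      by (rule sym)
  qed
  also have "\<dots> = of_nat (card (Pow B)) * (\<Sum>\<rho>\<in>symperms N lam. G (node_vars N J t u \<rho>))"
    by simp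
  finally show ?thesis by simp
qed

section \<open>Strand sums and the exchange relations\<close>

text \<open>The product of the pair factors among the nodes of two strands entering at the levels \<open>k\<close>
  and \<open>l\<close>, with values \<open>X\<close> and \<open>Y\<close>.\<close>

definition strand_factor :: "'a::field \<Rightarrow> nat \<Rightarrow> nat \<Rightarrow> nat \<Rightarrow> (nat \<Rightarrow> 'a) \<Rightarrow> (nat \<Rightarrow> 'a) \<Rightarrow> 'a" where
  "strand_factor h N k l X Y = (\<Prod>m\<in>{k..<N}. if l \<le> Suc m then 1 - Y (Suc m) / X m else 1)
     * (\<Prod>m\<in>{l..<N}. if k \<le> Suc m then 1 - h * X (Suc m) / Y m else 1)
     * (\<Prod>m\<in>{max k l..<N}. (1 - h * Y m / X m) / (1 - Y m / X m))"

lemma prod_single_filter: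
  "finite A \<Longrightarrow> (\<Prod>x\<in>{x\<in>A. P \<and> x = c}. g x) = (if P \<and> c \<in> A then g c else 1)"
proof -
  assume "finite A"
  have "{x\<in>A. P \<and> x = c} = (if P \<and> c \<in> A then {c} else {})" by auto
  then show ?thesis by simp
qed

lemma prod_atMost_drop:
  "(\<Prod>m\<in>{k..N::nat}. if m < N \<and> P m then f m else (1::'a::comm_monoid_mult)) = (\<Prod>m\<in>{k..<N}. if P m then f m else 1)"
proof (cases "k \<le> N")
  case True
  then have "{k..N} = insert N {k..<N}" by auto
  then show ?thesis by (simp add: prod.insert)
next
  case False
  then show ?thesis by simp
qed

lemma prod_pair_factor_lower_upper:
  assumes "m \<le> N"
  shows "(\<Prod>m'\<in>{l..N}. pair_factor h N (m,a) (m',Suc a) (X m) (Y m'))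
   = (if m < N \<and> l \<le> Suc m then 1 - Y (Suc m) / X m else 1)
   * (if m < N \<and> l \<le> m then (1 - h * Y m / X m) / (1 - Y m / X m) else 1)"
proof -
  have "(\<Prod>m'\<in>{l..N}. pair_factor h N (m,a) (m',Suc a) (X m) (Y m'))
    = (\<Prod>m'\<in>{l..N}. if m < N \<and> m' = Suc m then 1 - Y m' / X m
         else if m < N \<and> m' = m then (1 - h * Y m' / X m) / (1 - Y m' / X m) else 1)"
    by (rule prod.cong[OF refl]) (auto simp: pair_factor_def)
  also have "\<dots> = (\<Prod>m'\<in>{m'\<in>{l..N}. m < N \<and> m' = Suc m}. 1 - Y m' / X m)
      * (\<Prod>m'\<in>{m'\<in>{l..N}. m < N \<and> m' = m}. (1 - h * Y m' / X m) / (1 - Y m' / X m))"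
    by (rule prod_if_if) auto
  also have "\<dots> = (if m < N \<and> l \<le> Suc m then 1 - Y (Suc m) / X m else 1)
   * (if m < N \<and> l \<le> m then (1 - h * Y m / X m) / (1 - Y m / X m) else 1)" unfolding prod_single_filter[OF finite_atLeastAtMost] using assms by simp
  finally show ?thesis .
qed

lemma prod_pair_factor_upper_lower:
  "(\<Prod>m'\<in>{k..N}. pair_factor h N (m,Suc a) (m',a) (Y m) (X m'))
   = (if m < N \<and> k \<le> Suc m then 1 - h * X (Suc m) / Y m else 1)"
proof -
  have "(\<Prod>m'\<in>{k..N}. pair_factor h N (m,Suc a) (m',a) (Y m) (X m'))
    = (\<Prod>m'\<in>{m'\<in>{k..N}. m < N \<and> m' = Suc m}. 1 - h * X m' / Y m)"
    by (subst prod.inter_filter) (auto simp: pair_factor_def intro!: prod.cong)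
  also have "\<dots> = (if m < N \<and> k \<le> Suc m then 1 - h * X (Suc m) / Y m else 1)" unfolding prod_single_filter[OF finite_atLeastAtMost] by simp
  finally show ?thesis .
qed

lemma strand_prod_eq:
  "(\<Prod>v\<in>(\<lambda>m. (m,a)) ` {k..N} \<union> (\<lambda>m. (m,Suc a)) ` {l..N}.
           \<Prod>w\<in>(\<lambda>m. (m,a)) ` {k..N} \<union> (\<lambda>m. (m,Suc a)) ` {l..N}. pair_factor h N v w (y v) (y w))
       = strand_factor h N k l (\<lambda>m. y (m,a)) (\<lambda>m. y (m,Suc a))"
proof -
  define La where "La = (\<lambda>m. (m,a)) ` {k..N}"
  define Lb where "Lb = (\<lambda>m. (m,Suc a)) ` {l..N}"
  define X where "X = (\<lambda>m. y (m,a))"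
  define Y where "Y = (\<lambda>m. y (m,Suc a))"
  have disj: "La \<inter> Lb = {}" by (auto simp: La_def Lb_def)
  have fin: "finite La" "finite Lb" by (auto simp: La_def Lb_def)
  have ia: "inj_on (\<lambda>m. (m,a)) A" and ib: "inj_on (\<lambda>m. (m,Suc a)) A" for A by (auto simp: inj_on_def)
  have s1: "(\<Prod>v\<in>La \<union> Lb. \<Prod>w\<in>La \<union> Lb. pair_factor h N v w (y v) (y w))
      = (\<Prod>v\<in>La. (\<Prod>w\<in>La. pair_factor h N v w (y v) (y w)) * (\<Prod>w\<in>Lb. pair_factor h N v w (y v) (y w)))
      * (\<Prod>v\<in>Lb. (\<Prod>w\<in>La. pair_factor h N v w (y v) (y w)) * (\<Prod>w\<in>Lb. pair_factor h N v w (y v) (y w)))"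
    using disj fin by (simp add: prod.union_disjoint)
  have s2: "(\<Prod>v\<in>La. (\<Prod>w\<in>La. pair_factor h N v w (y v) (y w)) * (\<Prod>w\<in>Lb. pair_factor h N v w (y v) (y w)))
      = (\<Prod>m\<in>{k..N}. (\<Prod>m'\<in>{k..N}. pair_factor h N (m,a) (m',a) (X m) (X m')) * (\<Prod>m'\<in>{l..N}. pair_factor h N (m,a) (m',Suc a) (X m) (Y m')))"
    unfolding La_def Lb_def X_def Y_def by (simp add: prod.reindex[OF ia] prod.reindex[OF ib])
  have s3: "(\<Prod>v\<in>Lb. (\<Prod>w\<in>La. pair_factor h N v w (y v) (y w)) * (\<Prod>w\<in>Lb. pair_factor h N v w (y v) (y w)))
      = (\<Prod>m\<in>{l..N}. (\<Prod>m'\<in>{k..N}. pair_factor h N (m,Suc a) (m',a) (Y m) (X m')) * (\<Prod>m'\<in>{l..N}. pair_factor h N (m,Suc a) (m',Suc a) (Y m) (Y m')))"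
    unfolding La_def Lb_def X_def Y_def by (simp add: prod.reindex[OF ia] prod.reindex[OF ib])
  have c1: "pair_factor h N (m,a) (m',a) U V = 1" for m m' U V by (simp add: pair_factor_def)
  have c4: "pair_factor h N (m,Suc a) (m',Suc a) U V = 1" for m m' U V by (simp add: pair_factor_def)
  have A: "(\<Prod>m\<in>{k..N}. (\<Prod>m'\<in>{k..N}. pair_factor h N (m,a) (m',a) (X m) (X m')) * (\<Prod>m'\<in>{l..N}. pair_factor h N (m,a) (m',Suc a) (X m) (Y m')))
     = (\<Prod>m\<in>{k..<N}. if l \<le> Suc m then 1 - Y (Suc m) / X m else 1)
     * (\<Prod>m\<in>{k..<N}. if l \<le> m then (1 - h * Y m / X m) / (1 - Y m / X m) else 1)"
  proof -
    have "(\<Prod>m\<in>{k..N}. (\<Prod>m'\<in>{k..N}. pair_factor h N (m,a) (m',a) (X m) (X m')) * (\<Prod>m'\<in>{l..N}. pair_factor h N (m,a) (m',Suc a) (X m) (Y m')))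
      = (\<Prod>m\<in>{k..N}. (if m < N \<and> l \<le> Suc m then 1 - Y (Suc m) / X m else 1)
     * (if m < N \<and> l \<le> m then (1 - h * Y m / X m) / (1 - Y m / X m) else 1))"
      by (rule prod.cong[OF refl]) (simp add: c1 prod_pair_factor_lower_upper)
    also have "\<dots> = (\<Prod>m\<in>{k..<N}. if l \<le> Suc m then 1 - Y (Suc m) / X m else 1)
     * (\<Prod>m\<in>{k..<N}. if l \<le> m then (1 - h * Y m / X m) / (1 - Y m / X m) else 1)" by (simp add: prod.distrib prod_atMost_drop)
    finally show ?thesis .
  qed
  have B: "(\<Prod>m\<in>{l..N}. (\<Prod>m'\<in>{k..N}. pair_factor h N (m,Suc a) (m',a) (Y m) (X m')) * (\<Prod>m'\<in>{l..N}. pair_factor h N (m,Suc a) (m',Suc a) (Y m) (Y m')))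
     = (\<Prod>m\<in>{l..<N}. if k \<le> Suc m then 1 - h * X (Suc m) / Y m else 1)"
    by (simp add: prod_pair_factor_upper_lower c4 prod_atMost_drop)
  have C: "(\<Prod>m\<in>{k..<N}. if l \<le> m then (1 - h * Y m / X m) / (1 - Y m / X m) else 1)
     = (\<Prod>m\<in>{max k l..<N}. (1 - h * Y m / X m) / (1 - Y m / X m))"
  proof -
    have "{m\<in>{k..<N}. l \<le> m} = {max k l..<N}" by auto
    then show ?thesis by (simp add: prod.inter_filter[symmetric])
  qed
  show ?thesis
    unfolding La_def[symmetric] Lb_def[symmetric] s1 s2 s3 A B C strand_factor_def X_def[symmetric] Y_def[symmetric]
    by (simp add: ac_simps)
qed

lemma prod_ladder_factor:
  "(\<Prod>m\<in>A. 1 - Y (Suc m) / X m) * (\<Prod>m\<in>A. 1 - h * X (Suc m) / Y m)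
     * (\<Prod>m\<in>A. (1 - h * Y m / X m) / (1 - Y m / X m))
   = (\<Prod>m\<in>A. ladder_factor h (X m) (Y m) (X (Suc m)) (Y (Suc m)))"
  by (simp only: ladder_factor_def prod.distrib)

lemma strand_factor_diag:
  "strand_factor h N k k X Y = (\<Prod>m\<in>{k..<N}. ladder_factor h (X m) (Y m) (X (Suc m)) (Y (Suc m)))"
proof -
  have "strand_factor h N k k X Y = (\<Prod>m\<in>{k..<N}. 1 - Y (Suc m) / X m) * (\<Prod>m\<in>{k..<N}. 1 - h * X (Suc m) / Y m)
     * (\<Prod>m\<in>{k..<N}. (1 - h * Y m / X m) / (1 - Y m / X m))"
  proof -
    have "(\<Prod>m\<in>{k..<N}. if k \<le> Suc m then 1 - Y (Suc m) / X m else 1) = (\<Prod>m\<in>{k..<N}. 1 - Y (Suc m) / X m)"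
      by (intro prod.cong refl) auto
    moreover have "(\<Prod>m\<in>{k..<N}. if k \<le> Suc m then 1 - h * X (Suc m) / Y m else 1) = (\<Prod>m\<in>{k..<N}. 1 - h * X (Suc m) / Y m)"
      by (intro prod.cong refl) auto
    ultimately show ?thesis unfolding strand_factor_def by simp
  qed
  then show ?thesis by (simp add: prod_ladder_factor)
qed

lemma filter_Suc_ge:
  assumes "k < l"
  shows "{m\<in>{k..<N}. l \<le> Suc m} = (if l \<le> N then insert (l - 1) {l..<N} else {})"
  using assms by auto

lemma strand_factor_less:
  assumes "k < l" "l \<le> N"
  shows "strand_factor h N k l X Y = (1 - Y l / X (l - 1)) * (\<Prod>m\<in>{l..<N}. ladder_factor h (X m) (Y m) (X (Suc m)) (Y (Suc m)))"
proof -
  have e1: "(\<Prod>m\<in>{k..<N}. if l \<le> Suc m then 1 - Y (Suc m) / X m else 1)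
      = (1 - Y l / X (l - 1)) * (\<Prod>m\<in>{l..<N}. 1 - Y (Suc m) / X m)"
  proof -
    have "(\<Prod>m\<in>{k..<N}. if l \<le> Suc m then 1 - Y (Suc m) / X m else 1)
        = (\<Prod>m\<in>{m\<in>{k..<N}. l \<le> Suc m}. 1 - Y (Suc m) / X m)"
      by (rule prod.inter_filter[symmetric]) simp
    also have "\<dots> = (\<Prod>m\<in>insert (l - 1) {l..<N}. 1 - Y (Suc m) / X m)"
      using filter_Suc_ge[OF assms(1), of N] assms by simp
    also have "\<dots> = (1 - Y l / X (l - 1)) * (\<Prod>m\<in>{l..<N}. 1 - Y (Suc m) / X m)"
      using assms by (subst prod.insert) auto
    finally show ?thesis .
  qed
  have e2: "(\<Prod>m\<in>{l..<N}. if k \<le> Suc m then 1 - h * X (Suc m) / Y m else 1)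
      = (\<Prod>m\<in>{l..<N}. 1 - h * X (Suc m) / Y m)"
    using assms by (intro prod.cong refl) auto
  have e3: "max k l = l" using assms by simp
  show ?thesis unfolding strand_factor_def e1 e2 e3 by (simp add: prod_ladder_factor[symmetric] ac_simps)
qed

lemma strand_factor_greater:
  assumes "l < k" "k \<le> N"
  shows "strand_factor h N k l X Y = (1 - h * X k / Y (k - 1)) * (\<Prod>m\<in>{k..<N}. ladder_factor h (X m) (Y m) (X (Suc m)) (Y (Suc m)))"
proof -
  have e2: "(\<Prod>m\<in>{l..<N}. if k \<le> Suc m then 1 - h * X (Suc m) / Y m else 1)
      = (1 - h * X k / Y (k - 1)) * (\<Prod>m\<in>{k..<N}. 1 - h * X (Suc m) / Y m)"
  proof -
    have "(\<Prod>m\<in>{l..<N}. if k \<le> Suc m then 1 - h * X (Suc m) / Y m else 1)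
        = (\<Prod>m\<in>{m\<in>{l..<N}. k \<le> Suc m}. 1 - h * X (Suc m) / Y m)"
      by (rule prod.inter_filter[symmetric]) simp
    also have "\<dots> = (\<Prod>m\<in>insert (k - 1) {k..<N}. 1 - h * X (Suc m) / Y m)"
      using filter_Suc_ge[OF assms(1), of N] assms by simp
    also have "\<dots> = (1 - h * X k / Y (k - 1)) * (\<Prod>m\<in>{k..<N}. 1 - h * X (Suc m) / Y m)"
      using assms by (subst prod.insert) auto
    finally show ?thesis .
  qed
  have e1: "(\<Prod>m\<in>{k..<N}. if l \<le> Suc m then 1 - Y (Suc m) / X m else 1)
      = (\<Prod>m\<in>{k..<N}. 1 - Y (Suc m) / X m)"
    using assms by (intro prod.cong refl) auto
  have e3: "max k l = k" using assms by simp
  show ?thesis unfolding strand_factor_def e1 e2 e3 by (simp add: prod_ladder_factor[symmetric] ac_simps)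
qed

text \<open>The part of one summand of the symmetrisation that depends on the strands, summed over
  the exchanges of the strands at the levels where both are present.\<close>

definition strand_sum :: "'a::field \<Rightarrow> nat \<Rightarrow> nat \<Rightarrow> nat \<Rightarrow> (nat \<Rightarrow> 'a) \<Rightarrow> (nat \<Rightarrow> 'a) \<Rightarrow> 'a" where
  "strand_sum h N k l X Y =
     (\<Sum>E\<in>Pow {max k l..<N}. strand_factor h N k l (swap_on E X Y) (swap_on E Y X))"

lemma strand_sum_less_eq_ladder_sum:
  assumes "k < l" "l \<le> N"
  shows "strand_sum h N k l X Y = ladder_sum h (\<lambda>A B. 1 - B / X (l - 1)) X Y l (N - l) (X N) (Y N)"
proof -
  have "strand_sum h N k l X Y
     = (\<Sum>E\<in>Pow {l..<l + (N - l)}. (\<lambda>A B. 1 - B / X (l - 1)) (swap_on E X Y l) (swap_on E Y X l) *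
      (\<Prod>m\<in>{l..<l + (N - l)}. ladder_factor h (swap_on E X Y m) (swap_on E Y X m) (swap_on E X Y (Suc m)) (swap_on E Y X (Suc m))))"
    unfolding strand_sum_def
  proof (rule sum.cong)
    show "Pow {max k l..<N} = Pow {l..<l + (N - l)}" using assms by simp
  next
    fix E assume "E \<in> Pow {l..<l + (N - l)}"
    moreover have "l - 1 \<notin> {l..<l + (N - l)}" using assms by simp
    ultimately have "l - 1 \<notin> E" by blast
    then show "strand_factor h N k l (swap_on E X Y) (swap_on E Y X) = (\<lambda>A B. 1 - B / X (l - 1)) (swap_on E X Y l) (swap_on E Y X l) *
        (\<Prod>m\<in>{l..<l + (N - l)}. ladder_factor h (swap_on E X Y m) (swap_on E Y X m) (swap_on E X Y (Suc m)) (swap_on E Y X (Suc m)))"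
      using assms by (simp add: strand_factor_less[OF assms] swap_on_notin)
  qed
  also have "\<dots> = ladder_sum h (\<lambda>A B. 1 - B / X (l - 1)) X Y l (N - l) (X (l + (N - l))) (Y (l + (N - l)))"
    by (rule sum_Pow_eq_ladder_sum)
  finally show ?thesis using assms by simp
qed

lemma strand_sum_greater_eq_ladder_sum:
  assumes "k < l" "l \<le> N"
  shows "strand_sum h N l k Y X = ladder_sum h (\<lambda>A B. 1 - h * A / X (l - 1)) X Y l (N - l) (Y N) (X N)"
proof -
  have "strand_sum h N l k Y X
     = (\<Sum>E\<in>Pow {l..<l + (N - l)}. (\<lambda>A B. 1 - h * A / X (l - 1)) (swap_on E Y X l) (swap_on E X Y l) *
      (\<Prod>m\<in>{l..<l + (N - l)}. ladder_factor h (swap_on E Y X m) (swap_on E X Y m) (swap_on E Y X (Suc m)) (swap_on E X Y (Suc m))))"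
    unfolding strand_sum_def
  proof (rule sum.cong)
    show "Pow {max l k..<N} = Pow {l..<l + (N - l)}" using assms by simp
  next
    fix E assume "E \<in> Pow {l..<l + (N - l)}"
    moreover have "l - 1 \<notin> {l..<l + (N - l)}" using assms by simp
    ultimately have "l - 1 \<notin> E" by blast
    then show "strand_factor h N l k (swap_on E Y X) (swap_on E X Y) = (\<lambda>A B. 1 - h * A / X (l - 1)) (swap_on E Y X l) (swap_on E X Y l) *
        (\<Prod>m\<in>{l..<l + (N - l)}. ladder_factor h (swap_on E Y X m) (swap_on E X Y m) (swap_on E Y X (Suc m)) (swap_on E X Y (Suc m)))"
      using assms by (simp add: strand_factor_greater[OF assms] swap_on_notin)
  qed
  also have "\<dots> = ladder_sum h (\<lambda>A B. 1 - h * A / X (l - 1)) Y X l (N - l) (Y (l + (N - l))) (X (l + (N - l)))"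
    by (rule sum_Pow_eq_ladder_sum)
  finally show ?thesis using assms by (simp add: ladder_sum_swap)
qed

lemma strand_sum_diag_eq_ladder_sum:
  assumes "k \<le> N"
  shows "strand_sum h N k k X Y = ladder_sum h (\<lambda>A B. 1) X Y k (N - k) (X N) (Y N)"
proof -
  have kN: "k + (N - k) = N" using assms by simp
  have "strand_sum h N k k X Y
     = (\<Sum>E\<in>Pow {k..<k + (N - k)}. (\<lambda>A B. 1) (swap_on E X Y k) (swap_on E Y X k) *
      (\<Prod>m\<in>{k..<k + (N - k)}. ladder_factor h (swap_on E X Y m) (swap_on E Y X m) (swap_on E X Y (Suc m)) (swap_on E Y X (Suc m))))"
    unfolding kN strand_sum_def by (simp add: strand_factor_diag)
  also have "\<dots> = ladder_sum h (\<lambda>A B. 1) X Y k (N - k) (X (k + (N - k))) (Y (k + (N - k)))"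
    by (rule sum_Pow_eq_ladder_sum)
  finally show ?thesis using kN by simp
qed

lemma strand_sum_diag_swap:
  assumes "k \<le> N" and nd: "\<And>m. m \<in> {k..<N} \<Longrightarrow> X m \<noteq> 0 \<and> Y m \<noteq> 0 \<and> X m \<noteq> Y m"
  shows "strand_sum h N k k Y X = strand_sum h N k k X Y"
  unfolding strand_sum_diag_eq_ladder_sum[OF assms(1)] ladder_sum_swap[of h _ Y X]
  by (rule ladder_sum_symmetric) (simp_all add: nd)

lemma strand_sum_less_relation:
  assumes "k < l" "l \<le> N" and nd: "\<And>m. m \<in> {l..<N} \<Longrightarrow> X m \<noteq> 0 \<and> Y m \<noteq> 0 \<and> X m \<noteq> Y m"
  shows "(Y N - h * X N) * strand_sum h N l k Y X
     = h * (Y N - X N) * strand_sum h N k l X Y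
     + (1 - h) * Y N * strand_sum h N l k (Y(N := X N)) (X(N := Y N))"
proof -
  define b :: "'a \<Rightarrow> 'a \<Rightarrow> 'a" where "b = (\<lambda>A B. 1 - B / X (l - 1))"
  define bS :: "'a \<Rightarrow> 'a \<Rightarrow> 'a" where "bS = (\<lambda>A B. 1 - h * A / X (l - 1))"
  have swapped_top: "strand_sum h N l k (Y(N := X N)) (X(N := Y N)) = ladder_sum h bS X Y l (N - l) (X N) (Y N)"
  proof -
    have "l - 1 \<noteq> N" using assms by arith
    then have "strand_sum h N l k (Y(N := X N)) (X(N := Y N))
      = ladder_sum h bS (X(N := Y N)) (Y(N := X N)) l (N - l) (X N) (Y N)"
      using strand_sum_greater_eq_ladder_sum[OF assms(1,2), where h=h and X="X(N := Y N)" and Y="Y(N := X N)"]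
      by (simp add: bS_def)
    also have "ladder_sum h bS (X(N := Y N)) (Y(N := X N)) l (N - l) = ladder_sum h bS X Y l (N - l)"
      by (rule ladder_sum_cong) auto
    finally show ?thesis .
  qed
  have base: "(B - h*A) * bS B A = h*(B-A)*b A B + (1-h)*(1*B+(1-1)*A)*bS A B" for A B
    unfolding b_def bS_def divide_inverse by algebra
  have "(B - h*A) * ladder_sum h bS X Y l (N - l) B A = h*(B-A)*ladder_sum h b X Y l (N - l) A B
           + (1-h)*(1*B+(1-1)*A)*ladder_sum h bS X Y l (N - l) A B" for A B
    by (rule ladder_sum_relation[OF base]) (simp add: nd)
  then show ?thesis
    unfolding swapped_top
    unfolding strand_sum_less_eq_ladder_sum[OF assms(1,2)] strand_sum_greater_eq_ladder_sum[OF assms(1,2)]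
      b_def[symmetric] bS_def[symmetric]
    by simp
qed

lemma strand_sum_greater_relation:
  assumes "l < k" "k \<le> N" and nd: "\<And>m. m \<in> {k..<N} \<Longrightarrow> X m \<noteq> 0 \<and> Y m \<noteq> 0 \<and> X m \<noteq> Y m"
  shows "(Y N - h * X N) * strand_sum h N l k Y X
     = (Y N - X N) * strand_sum h N k l X Y
     + (1 - h) * X N * strand_sum h N l k (Y(N := X N)) (X(N := Y N))"
proof -
  define b :: "'a \<Rightarrow> 'a \<Rightarrow> 'a" where "b = (\<lambda>A B. 1 - h * A / Y (k - 1))"
  define bS :: "'a \<Rightarrow> 'a \<Rightarrow> 'a" where "bS = (\<lambda>A B. 1 - B / Y (k - 1))"
  have unswapped: "strand_sum h N k l X Y = ladder_sum h b X Y k (N - k) (X N) (Y N)"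
    using strand_sum_greater_eq_ladder_sum[OF assms(1,2), where h=h and X=Y and Y=X]
    by (simp add: b_def ladder_sum_swap[of h _ Y X])
  have swapped: "strand_sum h N l k Y X = ladder_sum h bS X Y k (N - k) (Y N) (X N)"
    using strand_sum_less_eq_ladder_sum[OF assms(1,2), where h=h and X=Y and Y=X]
    by (simp add: bS_def ladder_sum_swap[of h _ Y X])
  have swapped_top: "strand_sum h N l k (Y(N := X N)) (X(N := Y N)) = ladder_sum h bS X Y k (N - k) (X N) (Y N)"
  proof -
    have "k - 1 \<noteq> N" using assms by arith
    then have "strand_sum h N l k (Y(N := X N)) (X(N := Y N))
      = ladder_sum h bS (Y(N := X N)) (X(N := Y N)) k (N - k) (X N) (Y N)"
      using strand_sum_less_eq_ladder_sum[OF assms(1,2), where h=h and X="Y(N := X N)" and Y="X(N := Y N)"]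
      by (simp add: bS_def)
    also have "ladder_sum h bS (Y(N := X N)) (X(N := Y N)) k (N - k) = ladder_sum h bS X Y k (N - k)"
      by (subst ladder_sum_swap[of h _ "Y(N := X N)"], rule ladder_sum_cong) auto
    finally show ?thesis .
  qed
  have base: "(B - h*A) * bS B A = 1*(B-A)*b A B + (1-h)*(0*B+(1-0)*A)*bS A B" for A B
    unfolding b_def bS_def divide_inverse by algebra
  have "(B - h*A) * ladder_sum h bS X Y k (N - k) B A = 1*(B-A)*ladder_sum h b X Y k (N - k) A B
           + (1-h)*(0*B+(1-0)*A)*ladder_sum h bS X Y k (N - k) A B" for A B
    by (rule ladder_sum_relation[OF base]) (simp add: nd)
  then show ?thesis
    unfolding swapped_top unswapped swapped by simp
qed

lemma exchange_solve_less:
  fixes x y h W0 W1 W2 :: "'a::field"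
  assumes y: "y \<noteq> 0" and D: "1 - h * (x / y) \<noteq> 0"
    and rel: "(y - h * x) * W1 = h * (y - x) * W0 + (1 - h) * y * W2"
  shows "W1 = h * (1 - x / y) / (1 - h * (x / y)) * W0 + (1 - h) / (1 - h * (x / y)) * W2"
proof -
  have eq: "1 - h * (x / y) = (y - h * x) / y" using y by (simp add: field_simps)
  then have Dy: "y - h * x \<noteq> 0" using D by auto
  have "W1 = (h * (y - x) * W0 + (1 - h) * y * W2) / (y - h * x)"
    using rel Dy by (metis nonzero_mult_div_cancel_left)
  also have "\<dots> = h * (1 - x / y) / (1 - h * (x / y)) * W0 + (1 - h) / (1 - h * (x / y)) * W2"
  proof -
    have c: "h * (1 - x / y) / (1 - h * (x / y)) = h * (y - x) / (y - h * x)"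
      "(1 - h) / (1 - h * (x / y)) = (1 - h) * y / (y - h * x)"
      using y Dy by (simp_all add: field_simps)
    show ?thesis unfolding c by (simp add: add_divide_distrib)
  qed
  finally show ?thesis .
qed
lemma exchange_solve_greater:
  fixes x y h W0 W1 W2 :: "'a::field"
  assumes y: "y \<noteq> 0" and D: "1 - h * (x / y) \<noteq> 0"
    and rel: "(y - h * x) * W1 = (y - x) * W0 + (1 - h) * x * W2"
  shows "W1 = (1 - x / y) / (1 - h * (x / y)) * W0 + (1 - h) * (x / y) / (1 - h * (x / y)) * W2"
proof -
  have eq: "1 - h * (x / y) = (y - h * x) / y" using y by (simp add: field_simps)
  then have Dy: "y - h * x \<noteq> 0" using D by auto
  have "W1 = ((y - x) * W0 + (1 - h) * x * W2) / (y - h * x)"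
    using rel Dy by (metis nonzero_mult_div_cancel_left)
  also have "\<dots> = (1 - x / y) / (1 - h * (x / y)) * W0 + (1 - h) * (x / y) / (1 - h * (x / y)) * W2"
  proof -
    have c: "(1 - x / y) / (1 - h * (x / y)) = (y - x) / (y - h * x)"
      "(1 - h) * (x / y) / (1 - h * (x / y)) = (1 - h) * x / (y - h * x)"
      using y Dy by (simp_all add: field_simps)
    show ?thesis unfolding c by (simp add: add_divide_distrib)
  qed
  finally show ?thesis .
qed

section \<open>Exchanging two adjacent positions\<close>

lemma ordpart_permutes_image:
  assumes f: "f permutes {1..n}" and I: "I \<in> ordpart N n lam"
  shows "(\<lambda>j. f ` I j) \<in> ordpart N n lam"
proof -
  have inj: "inj f" using f by (rule permutes_inj)
  have "card (f ` I j) = card (I j)" for j by (rule card_image[OF inj_on_subset[OF inj subset_UNIV]])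
  moreover have "f ` I i \<inter> f ` I j = f ` (I i \<inter> I j)" for i j by (rule image_Int[OF inj, symmetric])
  moreover have "(\<Union>j\<in>{1..N}. f ` I j) = f ` (\<Union>j\<in>{1..N}. I j)" by blast
  ultimately show ?thesis using I permutes_image[OF f] by (auto simp: ordpart_def)
qed

lemma ordpart_subset: "I \<in> ordpart N n lam \<Longrightarrow> I j \<subseteq> {1..n}"
  by (cases "j \<in> {1..N}") (auto simp: ordpart_def)

lemma upto_union_ordpart_top: "I \<in> ordpart N n lam \<Longrightarrow> upto_union I N = {1..n}"
  by (simp add: ordpart_def upto_union_def)

lemma finite_upto_union_ordpart: "I \<in> ordpart N n lam \<Longrightarrow> finite (upto_union I m)"
  by (auto simp: upto_union_def intro: finite_subset[OF ordpart_subset])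

lemma card_upto_union_ordpart:
  assumes I: "I \<in> ordpart N n lam" and m: "m \<in> {1..N}"
  shows "card (upto_union I m) = lsum lam m"
proof -
  have "card (upto_union I m) = (\<Sum>j\<in>{1..m}. card (I j))"
    unfolding upto_union_def
  proof (rule card_UN_disjoint)
    show "\<forall>j\<in>{1..m}. finite (I j)" using ordpart_subset[OF I] by (auto intro: finite_subset)
    show "\<forall>i\<in>{1..m}. \<forall>j\<in>{1..m}. i \<noteq> j \<longrightarrow> I i \<inter> I j = {}" using I m by (auto simp: ordpart_def)
  qed simp
  also have "\<dots> = lsum lam m" using I m by (auto simp: ordpart_def lsum_def intro!: sum.cong)
  finally show ?thesis .
qed

lemma mem_upto_union_ordpart:
  assumes I: "I \<in> ordpart N n lam" and "x \<in> I j" "j \<in> {1..N}" "m \<in> {1..N}"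
  shows "x \<in> upto_union I m \<longleftrightarrow> j \<le> m"
proof
  assume "x \<in> upto_union I m"
  then obtain i where "i \<in> {1..m}" "x \<in> I i" by (auto simp: upto_union_def)
  moreover have "i \<in> {1..N}" using \<open>i \<in> {1..m}\<close> assms(4) by auto
  ultimately have "i = j" using I assms(2,3) unfolding ordpart_def by blast
  then show "j \<le> m" using \<open>i \<in> {1..m}\<close> by simp
qed (use assms in \<open>auto simp: upto_union_def\<close>)

locale adjacent_pair =
  fixes N n :: nat and lam :: "nat \<Rightarrow> nat" and J :: "nat \<Rightarrow> nat set" and a k l :: nat
  assumes J: "J \<in> ordpart N n lam"
    and a: "a \<in> {1..n-1}"
    and k: "k \<in> {1..N}" and l: "l \<in> {1..N}"
    and a_mem: "a \<in> J k" and Suc_a_mem: "Suc a \<in> J l"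
begin

lemma finite_upto_union: "finite (upto_union J m)"
  by (rule finite_upto_union_ordpart[OF J])

lemma card_upto_union: "m \<in> {1..N} \<Longrightarrow> card (upto_union J m) = lsum lam m"
  by (rule card_upto_union_ordpart[OF J])

lemma upto_union_top: "upto_union J N = {1..n}"
  by (rule upto_union_ordpart_top[OF J])

lemma lower_mem_upto_union: "m \<in> {1..N} \<Longrightarrow> a \<in> upto_union J m \<longleftrightarrow> k \<le> m"
  by (rule mem_upto_union_ordpart[OF J a_mem k])

lemma upper_mem_upto_union: "m \<in> {1..N} \<Longrightarrow> Suc a \<in> upto_union J m \<longleftrightarrow> l \<le> m"
  by (rule mem_upto_union_ordpart[OF J Suc_a_mem l])

definition s :: "nat \<Rightarrow> nat" where "s = transpose a (Suc a)"
definition J' :: "nat \<Rightarrow> nat set" where "J' j = s ` J j"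

lemma s_invol[simp]: "s (s p) = p" by (simp add: s_def)
lemma s_inj: "inj s" by (metis s_invol injI)

lemma upto_union_image: "upto_union J' m = s ` upto_union J m"
  by (auto simp: upto_union_def J'_def)

lemma a_bounds: "a \<in> {1..n}" "Suc a \<in> {1..n}" using a by auto

lemma s_permutes: "s permutes {1..n}"
  using a_bounds by (simp add: s_def permutes_swap_id)

lemma s_range: "p \<in> {1..n} \<Longrightarrow> s p \<in> {1..n}"
  by (rule permutes_in_image[OF s_permutes, THEN iffD2])

lemma J'_ordpart: "J' \<in> ordpart N n lam"
  unfolding J'_def[abs_def] by (rule ordpart_permutes_image[OF s_permutes J])

lemma finite_upto_union': "finite (upto_union J' m)"
  by (rule finite_upto_union_ordpart[OF J'_ordpart])

lemma card_upto_union': "m \<in> {1..N} \<Longrightarrow> card (upto_union J' m) = lsum lam m"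
  by (rule card_upto_union_ordpart[OF J'_ordpart])

lemma upto_union_top': "upto_union J' N = {1..n}"
  by (rule upto_union_ordpart_top[OF J'_ordpart])

lemma nodes_image: "nodes N J' = swap_node a ` nodes N J"
proof -
  have "nodes N J' = {(m, q). m \<in> {1..N} \<and> q \<in> s ` upto_union J m}" by (auto simp: nodes_def upto_union_image)
  also have "\<dots> = swap_node a ` nodes N J"
  proof
    show "{(m, q). m \<in> {1..N} \<and> q \<in> s ` upto_union J m} \<subseteq> swap_node a ` nodes N J"
    proof
      fix v assume "v \<in> {(m, q). m \<in> {1..N} \<and> q \<in> s ` upto_union J m}"
      then obtain m p where "v = (m, s p)" "m \<in> {1..N}" "p \<in> upto_union J m" by auto
      then show "v \<in> swap_node a ` nodes N J"
        by (intro image_eqI[of _ _ "(m,p)"]) (auto simp: swap_node_def s_def nodes_def)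
    qed
    show "swap_node a ` nodes N J \<subseteq> {(m, q). m \<in> {1..N} \<and> q \<in> s ` upto_union J m}"
      by (auto simp: swap_node_def s_def nodes_def)
  qed
  finally show ?thesis .
qed

text \<open>Relabels the symmetrisation variables so that the node \<open>(m, s p)\<close> of \<open>J'\<close> carries the
  variable of the node \<open>(m, p)\<close> of \<open>J\<close>.\<close>

definition rerank :: "nat \<Rightarrow> nat \<Rightarrow> nat" where
  "rerank m = (\<lambda>c. if c \<in> {1..lsum lam m} then rank J m (s (pidx J' m c)) else c)"

lemma rerank_permutes:
  assumes m: "m \<in> {1..N}"
  shows "rerank m permutes {1..lsum lam m}"
proof -
  have b1: "bij_betw (pidx J' m) {1..lsum lam m} (upto_union J' m)"
    using pidx_bij[OF finite_upto_union'] card_upto_union'[OF m] by metis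
  have b2: "bij_betw s (upto_union J' m) (upto_union J m)"
  proof -
    have "s ` upto_union J' m = upto_union J m" by (simp add: upto_union_image image_image)
    moreover have "inj_on s (upto_union J' m)" by (rule inj_on_subset[OF s_inj]) simp
    ultimately show ?thesis by (simp add: bij_betw_def)
  qed
  have b3: "bij_betw (rank J m) (upto_union J m) {1..lsum lam m}"
    using bij_betw_rank[OF finite_upto_union] card_upto_union[OF m] by metis
  have "bij_betw (rank J m \<circ> (s \<circ> pidx J' m)) {1..lsum lam m} {1..lsum lam m}"
    by (rule bij_betw_trans[OF bij_betw_trans[OF b1 b2] b3])
  then have "bij_betw (rerank m) {1..lsum lam m} {1..lsum lam m}"
    by (rule bij_betw_cong[THEN iffD1, rotated]) (simp add: rerank_def)
  then show ?thesis by (rule bij_imp_permutes) (auto simp: rerank_def)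
qed

lemma node_vars_swap_node:
  assumes v: "v \<in> nodes N J"
  shows "node_vars N J' t u' (compose_levels N rerank \<rho>) (swap_node a v)
     = (if fst v = N then u' (s (snd v)) else node_vars N J t u \<rho> v)"
proof -
  obtain m p where vmp: "v = (m,p)" by (cases v)
  have m: "m \<in> {1..N}" and p: "p \<in> upto_union J m" using v vmp by (auto simp: nodes_def)
  have Snv: "swap_node a v = (m, s p)" by (simp add: vmp swap_node_def s_def)
  show ?thesis
  proof (cases "m = N")
    case True
    have "p \<in> {1..n}" using p True upto_union_top by simp
    then have "s p \<in> {1..n}" by (rule s_range)
    then show ?thesis using True Snv node_vars_top[OF upto_union_top', of "s p" t u' "compose_levels N rerank \<rho>"] by (simp add: vmp)
  next
    case False
    then have m': "m \<in> {1..N-1}" using m by auto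
    have sp: "s p \<in> upto_union J' m" using p by (simp add: upto_union_image)
    have i: "rank J' m (s p) \<in> {1..lsum lam m}" using rank_in[OF finite_upto_union' sp] card_upto_union'[OF m] by simp
    have "rerank m (rank J' m (s p)) = rank J m p"
      using i pidx_rank[OF finite_upto_union' sp] by (simp add: rerank_def)
    then show ?thesis using False m' Snv
      by (simp add: vmp node_vars_below compose_levels_def)
  qed
qed

lemma Wfun_swapped_eq:
  "Wfun N lam J' t u' h = (1 - h) ^ (\<Sum>k=1..N-1. lsum lam k)
     * (\<Sum>\<rho>\<in>symperms N lam. swapped_node_prod h N (nodes N J) a (\<lambda>v. if fst v = N then u' (s (snd v)) else node_vars N J t u \<rho> v))"
proof -
  have "(\<Sum>\<rho>\<in>symperms N lam. node_prod h N (nodes N J') (node_vars N J' t u' \<rho>))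
      = (\<Sum>\<rho>\<in>symperms N lam. node_prod h N (nodes N J') (node_vars N J' t u' (compose_levels N rerank \<rho>)))"
    by (rule sum_symperms_compose_levels) (rule rerank_permutes, auto)
  also have "\<dots> = (\<Sum>\<rho>\<in>symperms N lam. swapped_node_prod h N (nodes N J) a (\<lambda>v. if fst v = N then u' (s (snd v)) else node_vars N J t u \<rho> v))"
  proof (rule sum.cong[OF refl])
    fix \<rho>
    have "node_prod h N (nodes N J') (node_vars N J' t u' (compose_levels N rerank \<rho>))
      = (\<Prod>v\<in>nodes N J. \<Prod>w\<in>nodes N J. pair_factor h N (swap_node a v) (swap_node a w) (node_vars N J' t u' (compose_levels N rerank \<rho>) (swap_node a v)) (node_vars N J' t u' (compose_levels N rerank \<rho>) (swap_node a w)))"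
      unfolding nodes_image by (rule node_prod_image[OF inj_on_swap_node])
    also have "\<dots> = swapped_node_prod h N (nodes N J) a (\<lambda>v. if fst v = N then u' (s (snd v)) else node_vars N J t u \<rho> v)"
      unfolding swapped_node_prod_def by (intro prod.cong refl) (simp add: node_vars_swap_node[where u=u])
    finally show "node_prod h N (nodes N J') (node_vars N J' t u' (compose_levels N rerank \<rho>)) = swapped_node_prod h N (nodes N J) a (\<lambda>v. if fst v = N then u' (s (snd v)) else node_vars N J t u \<rho> v)" .
  qed
  finally show ?thesis using Wfun_eq_sum_node_prod[OF finite_upto_union' card_upto_union', where t=t and u=u' and h=h] by simp
qed

lemma k_bounds: "1 \<le> k" "k \<le> N" using k by auto
lemma l_bounds: "1 \<le> l" "l \<le> N" using l by auto

lemma strand_nodes_eq: "strand_nodes (nodes N J) a = (\<lambda>m. (m,a)) ` {k..N} \<union> (\<lambda>m. (m,Suc a)) ` {l..N}"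
proof
  show "strand_nodes (nodes N J) a \<subseteq> (\<lambda>m. (m,a)) ` {k..N} \<union> (\<lambda>m. (m,Suc a)) ` {l..N}"
  proof
    fix v assume v: "v \<in> strand_nodes (nodes N J) a"
    obtain m p where vmp: "v = (m,p)" by (cases v)
    have m: "m \<in> {1..N}" and p: "p \<in> upto_union J m" and pa: "p = a \<or> p = Suc a"
      using v vmp by (auto simp: strand_nodes_def nodes_def)
    show "v \<in> (\<lambda>m. (m,a)) ` {k..N} \<union> (\<lambda>m. (m,Suc a)) ` {l..N}"
      using pa lower_mem_upto_union[OF m] upper_mem_upto_union[OF m] p m by (auto simp: vmp)
  qed
  show "(\<lambda>m. (m,a)) ` {k..N} \<union> (\<lambda>m. (m,Suc a)) ` {l..N} \<subseteq> strand_nodes (nodes N J) a"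
  proof
    fix v assume "v \<in> (\<lambda>m. (m,a)) ` {k..N} \<union> (\<lambda>m. (m,Suc a)) ` {l..N}"
    then consider m where "v = (m,a)" "m \<in> {k..N}" | m where "v = (m,Suc a)" "m \<in> {l..N}" by auto
    then show "v \<in> strand_nodes (nodes N J) a"
    proof cases
      case 1
      then have "m \<in> {1..N}" using k_bounds by auto
      then show ?thesis using 1 lower_mem_upto_union by (auto simp: strand_nodes_def nodes_def)
    next
      case 2
      then have "m \<in> {1..N}" using l_bounds by auto
      then show ?thesis using 2 upper_mem_upto_union by (auto simp: strand_nodes_def nodes_def)
    qed
  qed
qed

lemma strand_prod_nodes: "strand_prod h N (nodes N J) a y = strand_factor h N k l (\<lambda>m. y (m,a)) (\<lambda>m. y (m,Suc a))"
  unfolding strand_prod_def strand_nodes_eq by (rule strand_prod_eq)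

lemma swapped_strand_prod_nodes: "swapped_strand_prod h N (nodes N J) a y = strand_factor h N l k (\<lambda>m. y (m,Suc a)) (\<lambda>m. y (m,a))"
proof -
  define L where "L = (\<lambda>m. (m,a)) ` {k..N} \<union> (\<lambda>m. (m,Suc a)) ` {l..N}"
  have SL: "swap_node a ` L = (\<lambda>m. (m,a)) ` {l..N} \<union> (\<lambda>m. (m,Suc a)) ` {k..N}"
    unfolding L_def by (auto simp: swap_node_def image_Un image_image)
  have "swapped_strand_prod h N (nodes N J) a y = (\<Prod>v\<in>L. \<Prod>w\<in>L. pair_factor h N (swap_node a v) (swap_node a w) (y v) (y w))"
    unfolding swapped_strand_prod_def strand_nodes_eq L_def ..
  also have "\<dots> = (\<Prod>v\<in>L. \<Prod>w\<in>L. pair_factor h N (swap_node a v) (swap_node a w) (y (swap_node a (swap_node a v))) (y (swap_node a (swap_node a w))))"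
    by (simp add: swap_node_swap_node)
  also have "\<dots> = (\<Prod>v\<in>swap_node a ` L. \<Prod>w\<in>swap_node a ` L. pair_factor h N v w (y (swap_node a v)) (y (swap_node a w)))"
    by (rule prod_prod_image[OF inj_on_swap_node, symmetric])
  also have "\<dots> = strand_factor h N l k (\<lambda>m. y (swap_node a (m,a))) (\<lambda>m. y (swap_node a (m,Suc a)))"
    unfolding SL by (rule strand_prod_eq[where y="\<lambda>v. y (swap_node a v)"])
  also have "\<dots> = strand_factor h N l k (\<lambda>m. y (m,Suc a)) (\<lambda>m. y (m,a))"
    by (simp add: swap_node_def)
  finally show ?thesis .
qed

lemma swap_levels_strands:
  "(\<lambda>m. (y \<circ> swap_levels E a) (m,a)) = swap_on E (\<lambda>m. y (m,a)) (\<lambda>m. y (m,Suc a))"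
  "(\<lambda>m. (y \<circ> swap_levels E a) (m,Suc a)) = swap_on E (\<lambda>m. y (m,Suc a)) (\<lambda>m. y (m,a))"
  by (auto simp: fun_eq_iff swap_levels_def swap_on_def)

definition common_levels where "common_levels = {max k l..<N}"

lemma common_levels_subset: "common_levels \<subseteq> {1..N-1}" using k_bounds l_bounds by (auto simp: common_levels_def)

lemma common_levels_mem: "m \<in> common_levels \<Longrightarrow> a \<in> upto_union J m \<and> Suc a \<in> upto_union J m"
proof -
  assume m: "m \<in> common_levels"
  then have "m \<in> {1..N}" "k \<le> m" "l \<le> m" using k_bounds l_bounds by (auto simp: common_levels_def)
  then show ?thesis using lower_mem_upto_union upper_mem_upto_union by auto
qed

lemma finite_nodes: "finite (nodes N J)" using finite_upto_union by (simp add: nodes_def)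

lemma swap_levels_nodes:
  assumes "E \<subseteq> common_levels \<union> {N}"
  shows "swap_levels E a ` nodes N J = nodes N J"
proof (rule swap_levels_image)
  fix m assume "m \<in> E"
  then have "m \<in> common_levels \<or> m = N" using assms by auto
  then show "a \<in> upto_union J m \<longleftrightarrow> Suc a \<in> upto_union J m"
    using common_levels_mem upto_union_top a_bounds by auto
qed

lemma off_strand_prod_swap_levels:
  assumes "E \<subseteq> common_levels \<union> {N}"
  shows "off_strand_prod h N (nodes N J) a (y \<circ> swap_levels E a) = off_strand_prod h N (nodes N J) a y"
  by (rule off_strand_prod_invariant[OF swap_levels_nodes[OF assms] inj_on_swap_levels swap_levels_simps(1) swap_levels_simps(2) swap_levels_simps(3)])

lemma strand_sum_common_levels:
  "strand_sum h N k l X Y = (\<Sum>E\<in>Pow common_levels. strand_factor h N k l (swap_on E X Y) (swap_on E Y X))"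
  "strand_sum h N l k X Y = (\<Sum>E\<in>Pow common_levels. strand_factor h N l k (swap_on E X Y) (swap_on E Y X))"
  by (simp_all add: strand_sum_def common_levels_def max.commute)

lemma sum_Pow_node_prod_swap_levels:
  "(\<Sum>E\<in>Pow common_levels. node_prod h N (nodes N J) (y \<circ> swap_levels E a))
     = off_strand_prod h N (nodes N J) a y * strand_sum h N k l (\<lambda>m. y (m,a)) (\<lambda>m. y (m,Suc a))"
  unfolding strand_sum_common_levels sum_distrib_left
proof (rule sum.cong[OF refl])
  fix E assume "E \<in> Pow common_levels"
  then have E: "E \<subseteq> common_levels \<union> {N}" by auto
  show "node_prod h N (nodes N J) (y \<circ> swap_levels E a) = off_strand_prod h N (nodes N J) a y
      * strand_factor h N k l (swap_on E (\<lambda>m. y (m,a)) (\<lambda>m. y (m,Suc a))) (swap_on E (\<lambda>m. y (m,Suc a)) (\<lambda>m. y (m,a)))"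
    unfolding node_prod_split[OF finite_nodes, where a=a] off_strand_prod_swap_levels[OF E]
      strand_prod_nodes swap_levels_strands by simp
qed

lemma sum_Pow_swapped_node_prod_swap_levels:
  "(\<Sum>E\<in>Pow common_levels. swapped_node_prod h N (nodes N J) a (y \<circ> swap_levels E a))
     = off_strand_prod h N (nodes N J) a y * strand_sum h N l k (\<lambda>m. y (m,Suc a)) (\<lambda>m. y (m,a))"
  unfolding strand_sum_common_levels sum_distrib_left
proof (rule sum.cong[OF refl])
  fix E assume "E \<in> Pow common_levels"
  then have E: "E \<subseteq> common_levels \<union> {N}" by auto
  show "swapped_node_prod h N (nodes N J) a (y \<circ> swap_levels E a) = off_strand_prod h N (nodes N J) a y
      * strand_factor h N l k (swap_on E (\<lambda>m. y (m,Suc a)) (\<lambda>m. y (m,a))) (swap_on E (\<lambda>m. y (m,a)) (\<lambda>m. y (m,Suc a)))"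
    unfolding swapped_node_prod_split[OF finite_nodes] off_strand_prod_swap_levels[OF E]
      swapped_strand_prod_nodes swap_levels_strands by simp
qed

lemma sum_Pow_swapped_node_prod_swap_levels_top:
  fixes y :: "nat \<times> nat \<Rightarrow> 'a::field"
  defines "X \<equiv> \<lambda>m. y (m,a)" and "Y \<equiv> \<lambda>m. y (m,Suc a)"
  shows "(\<Sum>E\<in>Pow common_levels. swapped_node_prod h N (nodes N J) a (y \<circ> swap_levels E a \<circ> swap_levels {N} a))
     = off_strand_prod h N (nodes N J) a y * strand_sum h N l k (Y(N := X N)) (X(N := Y N))"
  unfolding strand_sum_common_levels sum_distrib_left
proof (rule sum.cong[OF refl])
  fix E assume "E \<in> Pow common_levels"
  then have E: "insert N E \<subseteq> common_levels \<union> {N}" and NE: "N \<notin> E" by (auto simp: common_levels_def)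
  have comp: "y \<circ> swap_levels E a \<circ> swap_levels {N} a = y \<circ> swap_levels (insert N E) a"
    using swap_levels_insert_top[OF NE] by (auto simp: fun_eq_iff)
  show "swapped_node_prod h N (nodes N J) a (y \<circ> swap_levels E a \<circ> swap_levels {N} a) = off_strand_prod h N (nodes N J) a y *
      strand_factor h N l k (swap_on E (Y(N := X N)) (X(N := Y N))) (swap_on E (X(N := Y N)) (Y(N := X N)))"
    unfolding comp swapped_node_prod_split[OF finite_nodes] off_strand_prod_swap_levels[OF E]
      swapped_strand_prod_nodes swap_levels_strands swap_on_insert[OF NE] X_def Y_def by simp
qed

lemma node_vars_nondegenerate:
  assumes tnz: "\<forall>j\<in>{1..N-1}. \<forall>i\<in>{1..lsum lam j}. t j i \<noteq> 0"
    and tdist: "\<forall>j\<in>{1..N-1}. \<forall>i\<in>{1..lsum lam j}. \<forall>i'\<in>{1..lsum lam j}. i \<noteq> i' \<longrightarrow> t j i \<noteq> t j i'"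
    and r: "\<rho> \<in> symperms N lam" and m: "m \<in> common_levels"
  shows "node_vars N J t u \<rho> (m,a) \<noteq> 0 \<and> node_vars N J t u \<rho> (m,Suc a) \<noteq> 0 \<and> node_vars N J t u \<rho> (m,a) \<noteq> node_vars N J t u \<rho> (m,Suc a)"
proof -
  have m1: "m \<in> {1..N-1}" using m common_levels_subset by auto
  then have mN: "m \<noteq> N" and m2: "m \<in> {1..N}" by auto
  have perm: "\<rho> m permutes {1..lsum lam m}" using r m1 by (simp add: symperms_def)
  have both: "a \<in> upto_union J m" "Suc a \<in> upto_union J m" using common_levels_mem[OF m] by auto
  have ia: "rank J m a \<in> {1..lsum lam m}" "rank J m (Suc a) \<in> {1..lsum lam m}"
    using rank_in[OF finite_upto_union both(1)] rank_in[OF finite_upto_union both(2)] card_upto_union[OF m2] by auto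
  have "rank J m a \<noteq> rank J m (Suc a)"
  proof
    assume "rank J m a = rank J m (Suc a)"
    then have "pidx J m (rank J m a) = pidx J m (rank J m (Suc a))" by simp
    then show False using pidx_rank[OF finite_upto_union both(1)] pidx_rank[OF finite_upto_union both(2)] by simp
  qed
  then have ne: "\<rho> m (rank J m a) \<noteq> \<rho> m (rank J m (Suc a))"
    using permutes_inj[OF perm] by (auto dest: injD)
  have im: "\<rho> m (rank J m a) \<in> {1..lsum lam m}" "\<rho> m (rank J m (Suc a)) \<in> {1..lsum lam m}"
    using ia permutes_in_image[OF perm] by auto
  show ?thesis using tnz tdist m1 im ne mN by (simp add: node_vars_below)
qed

lemma Wfun_transposed_eq:
  "Wfun N lam J' t (\<lambda>p. u (s p)) h = (1 - h) ^ (\<Sum>k=1..N-1. lsum lam k)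
     * (\<Sum>\<rho>\<in>symperms N lam. swapped_node_prod h N (nodes N J) a (node_vars N J t u \<rho>))"
proof -
  have "swapped_node_prod h N (nodes N J) a (\<lambda>v. if fst v = N then u (s (s (snd v))) else node_vars N J t u \<rho> v)
      = swapped_node_prod h N (nodes N J) a (node_vars N J t u \<rho>)" for \<rho>
  proof (rule swapped_node_prod_cong)
    fix v assume "v \<in> nodes N J"
    then show "(if fst v = N then u (s (s (snd v))) else node_vars N J t u \<rho> v) = node_vars N J t u \<rho> v"
      using upto_union_top by (cases v) (auto simp: nodes_def node_vars_top[OF upto_union_top])
  qed
  then show ?thesis by (simp add: Wfun_swapped_eq[where u'="\<lambda>p. u (s p)" and u=u])
qed

lemma Wfun_transposed_top_eq:
  "Wfun N lam J' t u h = (1 - h) ^ (\<Sum>k=1..N-1. lsum lam k)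
     * (\<Sum>\<rho>\<in>symperms N lam. swapped_node_prod h N (nodes N J) a (node_vars N J t u \<rho> \<circ> swap_levels {N} a))"
proof -
  have "swapped_node_prod h N (nodes N J) a (\<lambda>v. if fst v = N then u (s (snd v)) else node_vars N J t u \<rho> v)
      = swapped_node_prod h N (nodes N J) a (node_vars N J t u \<rho> \<circ> swap_levels {N} a)" for \<rho>
  proof (rule swapped_node_prod_cong)
    fix v assume v: "v \<in> nodes N J"
    obtain m p where vmp: "v = (m,p)" by (cases v)
    show "(if fst v = N then u (s (snd v)) else node_vars N J t u \<rho> v) = (node_vars N J t u \<rho> \<circ> swap_levels {N} a) v"
    proof (cases "m = N")
      case True
      then have "p \<in> {1..n}" using v vmp upto_union_top by (auto simp: nodes_def)
      then have "s p \<in> {1..n}" by (rule s_range)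
      then show ?thesis using True by (simp add: vmp swap_levels_def s_def node_vars_top[OF upto_union_top])
    qed (simp add: vmp swap_levels_def)
  qed
  then show ?thesis by (simp add: Wfun_swapped_eq[where u'=u and u=u])
qed

abbreviation lower_strand where "lower_strand t u \<rho> \<equiv> \<lambda>m. node_vars N J t u \<rho> (m, a)"
abbreviation upper_strand where "upper_strand t u \<rho> \<equiv> \<lambda>m. node_vars N J t u \<rho> (m, Suc a)"

text \<open>Averaging the symmetrisation over the swaps of the two strands at the common levels
  separates each summand into a factor not touching the strands and a strand sum.\<close>

lemma card_Pow_mult_Wfun:
  "of_nat (card (Pow common_levels)) * Wfun N lam J t u h = (1 - h) ^ (\<Sum>k=1..N-1. lsum lam k)
     * (\<Sum>\<rho>\<in>symperms N lam. off_strand_prod h N (nodes N J) a (node_vars N J t u \<rho>)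
          * strand_sum h N k l (lower_strand t u \<rho>) (upper_strand t u \<rho>))"
proof -
  have "of_nat (card (Pow common_levels)) * (\<Sum>\<rho>\<in>symperms N lam. node_prod h N (nodes N J) (node_vars N J t u \<rho>))
      = (\<Sum>\<rho>\<in>symperms N lam. \<Sum>E\<in>Pow common_levels. node_prod h N (nodes N J) (node_vars N J t u \<rho> \<circ> swap_levels E a))"
    by (rule card_Pow_mult_sum_symperms[OF finite_upto_union card_upto_union common_levels_subset common_levels_mem node_prod_cong])
  moreover have "Wfun N lam J t u h = (1 - h) ^ (\<Sum>k=1..N-1. lsum lam k)
     * (\<Sum>\<rho>\<in>symperms N lam. node_prod h N (nodes N J) (node_vars N J t u \<rho>))"
    by (rule Wfun_eq_sum_node_prod[OF finite_upto_union card_upto_union])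
  ultimately show ?thesis
    unfolding sum_Pow_node_prod_swap_levels by (simp add: ac_simps)
qed

lemma card_Pow_mult_Wfun_transposed:
  "of_nat (card (Pow common_levels)) * Wfun N lam J' t (\<lambda>p. u (s p)) h = (1 - h) ^ (\<Sum>k=1..N-1. lsum lam k)
     * (\<Sum>\<rho>\<in>symperms N lam. off_strand_prod h N (nodes N J) a (node_vars N J t u \<rho>)
          * strand_sum h N l k (upper_strand t u \<rho>) (lower_strand t u \<rho>))"
proof -
  have "of_nat (card (Pow common_levels)) * (\<Sum>\<rho>\<in>symperms N lam. swapped_node_prod h N (nodes N J) a (node_vars N J t u \<rho>))
      = (\<Sum>\<rho>\<in>symperms N lam. \<Sum>E\<in>Pow common_levels. swapped_node_prod h N (nodes N J) a (node_vars N J t u \<rho> \<circ> swap_levels E a))"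
    by (rule card_Pow_mult_sum_symperms[OF finite_upto_union card_upto_union common_levels_subset common_levels_mem swapped_node_prod_cong])
  then show ?thesis
    unfolding Wfun_transposed_eq sum_Pow_swapped_node_prod_swap_levels by (simp add: ac_simps)
qed

lemma card_Pow_mult_Wfun_transposed_top:
  "of_nat (card (Pow common_levels)) * Wfun N lam J' t u h = (1 - h) ^ (\<Sum>k=1..N-1. lsum lam k)
     * (\<Sum>\<rho>\<in>symperms N lam. off_strand_prod h N (nodes N J) a (node_vars N J t u \<rho>)
          * strand_sum h N l k ((upper_strand t u \<rho>)(N := lower_strand t u \<rho> N))
              ((lower_strand t u \<rho>)(N := upper_strand t u \<rho> N)))"
proof -
  have resp: "swapped_node_prod h N (nodes N J) a (y \<circ> swap_levels {N} a) = swapped_node_prod h N (nodes N J) a (y' \<circ> swap_levels {N} a)"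
    if "\<And>v. v \<in> nodes N J \<Longrightarrow> y v = y' v" for y y'
  proof (rule swapped_node_prod_cong)
    fix v assume "v \<in> nodes N J"
    then have "swap_levels {N} a v \<in> nodes N J" using swap_levels_nodes[of "{N}"] by auto
    then show "(y \<circ> swap_levels {N} a) v = (y' \<circ> swap_levels {N} a) v" using that by simp
  qed
  have "of_nat (card (Pow common_levels)) * (\<Sum>\<rho>\<in>symperms N lam. swapped_node_prod h N (nodes N J) a (node_vars N J t u \<rho> \<circ> swap_levels {N} a))
      = (\<Sum>\<rho>\<in>symperms N lam. \<Sum>E\<in>Pow common_levels. swapped_node_prod h N (nodes N J) a (node_vars N J t u \<rho> \<circ> swap_levels E a \<circ> swap_levels {N} a))"
    by (rule card_Pow_mult_sum_symperms[where G="\<lambda>y. swapped_node_prod h N (nodes N J) a (y \<circ> swap_levels {N} a)",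
          OF finite_upto_union card_upto_union common_levels_subset common_levels_mem resp])
  then show ?thesis
    unfolding Wfun_transposed_top_eq sum_Pow_swapped_node_prod_swap_levels_top by (simp add: ac_simps)
qed

lemma Wfun_exchange_relation:
  fixes t :: "nat \<Rightarrow> nat \<Rightarrow> 'a::field_char_0" and \<alpha> \<beta> \<gamma> :: 'a
  assumes rel: "\<And>\<rho>. \<rho> \<in> symperms N lam \<Longrightarrow>
      \<alpha> * strand_sum h N l k (upper_strand t u \<rho>) (lower_strand t u \<rho>)
    = \<beta> * strand_sum h N k l (lower_strand t u \<rho>) (upper_strand t u \<rho>)
    + \<gamma> * strand_sum h N l k ((upper_strand t u \<rho>)(N := lower_strand t u \<rho> N))
          ((lower_strand t u \<rho>)(N := upper_strand t u \<rho> N))"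
  shows "\<alpha> * Wfun N lam J' t (\<lambda>p. u (s p)) h = \<beta> * Wfun N lam J t u h + \<gamma> * Wfun N lam J' t u h"
proof -
  define c :: 'a where "c = of_nat (card (Pow common_levels))"
  define C where "C = (1 - h) ^ (\<Sum>k=1..N-1. lsum lam k)"
  define off where "off \<rho> = off_strand_prod h N (nodes N J) a (node_vars N J t u \<rho>)" for \<rho>
  have "c * (\<alpha> * Wfun N lam J' t (\<lambda>p. u (s p)) h)
      = C * (\<Sum>\<rho>\<in>symperms N lam. off \<rho> * (\<alpha> * strand_sum h N l k (upper_strand t u \<rho>) (lower_strand t u \<rho>)))"
    unfolding c_def C_def off_def mult.left_commute[of _ \<alpha>] card_Pow_mult_Wfun_transposed
    by (simp add: sum_distrib_left ac_simps)
  also have "\<dots> = \<beta> * (C * (\<Sum>\<rho>\<in>symperms N lam. off \<rho> * strand_sum h N k l (lower_strand t u \<rho>) (upper_strand t u \<rho>)))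
      + \<gamma> * (C * (\<Sum>\<rho>\<in>symperms N lam. off \<rho> * strand_sum h N l k ((upper_strand t u \<rho>)(N := lower_strand t u \<rho> N))
          ((lower_strand t u \<rho>)(N := upper_strand t u \<rho> N))))"
    by (simp add: rel algebra_simps sum.distrib sum_distrib_left cong: sum.cong)
  also have "\<dots> = c * (\<beta> * Wfun N lam J t u h + \<gamma> * Wfun N lam J' t u h)"
    unfolding c_def C_def off_def distrib_left mult.left_commute[of _ \<beta>] mult.left_commute[of _ \<gamma>]
      card_Pow_mult_Wfun card_Pow_mult_Wfun_transposed_top ..
  finally have "c * (\<alpha> * Wfun N lam J' t (\<lambda>p. u (s p)) h) = c * (\<beta> * Wfun N lam J t u h + \<gamma> * Wfun N lam J' t u h)" .
  moreover have "c \<noteq> 0" by (simp add: c_def common_levels_def card_Pow)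
  ultimately show ?thesis by simp
qed

lemma strand_nondegenerate:
  assumes "\<forall>j\<in>{1..N-1}. \<forall>i\<in>{1..lsum lam j}. t j i \<noteq> 0"
    and "\<forall>j\<in>{1..N-1}. \<forall>i\<in>{1..lsum lam j}. \<forall>i'\<in>{1..lsum lam j}. i \<noteq> i' \<longrightarrow> t j i \<noteq> t j i'"
    and "\<rho> \<in> symperms N lam" "m \<in> {max k l..<N}"
  shows "lower_strand t u \<rho> m \<noteq> 0 \<and> upper_strand t u \<rho> m \<noteq> 0 \<and> lower_strand t u \<rho> m \<noteq> upper_strand t u \<rho> m"
  using node_vars_nondegenerate[OF assms(1-3)] assms(4) by (simp add: common_levels_def)

lemma strand_top: "lower_strand t u \<rho> N = u a" "upper_strand t u \<rho> N = u (Suc a)"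
  by (rule node_vars_top[OF upto_union_top a_bounds(1)], rule node_vars_top[OF upto_union_top a_bounds(2)])

lemma Wfun_transposition:
  fixes t :: "nat \<Rightarrow> nat \<Rightarrow> 'a::field_char_0" and u :: "nat \<Rightarrow> 'a" and h :: "'a"
  assumes tnz: "\<forall>j\<in>{1..N-1}. \<forall>i\<in>{1..lsum lam j}. t j i \<noteq> 0"
    and tdist: "\<forall>j\<in>{1..N-1}. \<forall>i\<in>{1..lsum lam j}. \<forall>i'\<in>{1..lsum lam j}. i \<noteq> i' \<longrightarrow> t j i \<noteq> t j i'"
    and unz: "\<forall>i\<in>{1..n}. u i \<noteq> 0"
    and D: "1 - h * (u a / u (Suc a)) \<noteq> 0"
  defines "w \<equiv> u a / u (Suc a)"
  shows "(k = l \<longrightarrow> Wfun N lam J' t (\<lambda>p. u (s p)) h = Wfun N lam J t u h)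
       \<and> (k < l \<longrightarrow> Wfun N lam J' t (\<lambda>p. u (s p)) h =
            h * (1 - w) / (1 - h * w) * Wfun N lam J t u h + (1 - h) / (1 - h * w) * Wfun N lam J' t u h)
       \<and> (k > l \<longrightarrow> Wfun N lam J' t (\<lambda>p. u (s p)) h =
            (1 - w) / (1 - h * w) * Wfun N lam J t u h + (1 - h) * w / (1 - h * w) * Wfun N lam J' t u h)"
proof (intro conjI impI)
  note nd = strand_nondegenerate[OF tnz tdist]
  have ua: "u (Suc a) \<noteq> 0" using unz a_bounds by auto
  show "Wfun N lam J' t (\<lambda>p. u (s p)) h = Wfun N lam J t u h" if "k = l"
  proof -
    have "1 * Wfun N lam J' t (\<lambda>p. u (s p)) h = 1 * Wfun N lam J t u h + 0 * Wfun N lam J' t u h"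
    proof (rule Wfun_exchange_relation)
      fix \<rho> assume "\<rho> \<in> symperms N lam"
      then show "1 * strand_sum h N l k (upper_strand t u \<rho>) (lower_strand t u \<rho>) = 1 * strand_sum h N k l (lower_strand t u \<rho>) (upper_strand t u \<rho>)
          + 0 * strand_sum h N l k ((upper_strand t u \<rho>)(N := lower_strand t u \<rho> N)) ((lower_strand t u \<rho>)(N := upper_strand t u \<rho> N))"
        using strand_sum_diag_swap[OF k_bounds(2), of "lower_strand t u \<rho>" "upper_strand t u \<rho>" h] nd[of \<rho>] that by simp
    qed
    then show ?thesis by simp
  qed
  show "Wfun N lam J' t (\<lambda>p. u (s p)) h =
      h * (1 - w) / (1 - h * w) * Wfun N lam J t u h + (1 - h) / (1 - h * w) * Wfun N lam J' t u h" if "k < l"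
    unfolding w_def
  proof (rule exchange_solve_less[OF ua D], rule Wfun_exchange_relation)
    fix \<rho> assume "\<rho> \<in> symperms N lam"
    then show "(u (Suc a) - h * u a) * strand_sum h N l k (upper_strand t u \<rho>) (lower_strand t u \<rho>)
        = h * (u (Suc a) - u a) * strand_sum h N k l (lower_strand t u \<rho>) (upper_strand t u \<rho>)
        + (1 - h) * u (Suc a) * strand_sum h N l k ((upper_strand t u \<rho>)(N := lower_strand t u \<rho> N)) ((lower_strand t u \<rho>)(N := upper_strand t u \<rho> N))"
      using strand_sum_less_relation[OF that l_bounds(2), of "lower_strand t u \<rho>" "upper_strand t u \<rho>" h] nd[of \<rho>] that
      by (simp add: strand_top max_absorb2)
  qed
  show "Wfun N lam J' t (\<lambda>p. u (s p)) h =
      (1 - w) / (1 - h * w) * Wfun N lam J t u h + (1 - h) * w / (1 - h * w) * Wfun N lam J' t u h" if "l < k"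
    unfolding w_def
  proof (rule exchange_solve_greater[OF ua D], rule Wfun_exchange_relation)
    fix \<rho> assume "\<rho> \<in> symperms N lam"
    then show "(u (Suc a) - h * u a) * strand_sum h N l k (upper_strand t u \<rho>) (lower_strand t u \<rho>)
        = (u (Suc a) - u a) * strand_sum h N k l (lower_strand t u \<rho>) (upper_strand t u \<rho>)
        + (1 - h) * u a * strand_sum h N l k ((upper_strand t u \<rho>)(N := lower_strand t u \<rho> N)) ((lower_strand t u \<rho>)(N := upper_strand t u \<rho> N))"
      using strand_sum_greater_relation[OF that k_bounds(2), of "lower_strand t u \<rho>" "upper_strand t u \<rho>" h] nd[of \<rho>] that
      by (simp add: strand_top max_absorb1)
  qed
qed

end

lemma Wsig_comp_transpose:
  assumes "bij \<sigma>"
  shows "Wsig N lam (\<sigma> \<circ> transpose a b) I t z h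
    = Wfun N lam (\<lambda>j. transpose a b ` inv \<sigma> ` I j) t (\<lambda>p. z (\<sigma> (transpose a b p))) h"
proof -
  have "inv (\<sigma> \<circ> transpose a b) = transpose a b \<circ> inv \<sigma>"
    using assms by (simp add: o_inv_distrib)
  then show ?thesis by (simp add: Wsig_def image_comp)
qed

lemma Wsig_transpose_parts:
  assumes "bij \<sigma>"
  shows "Wsig N lam \<sigma> (\<lambda>j. transpose (\<sigma> a) (\<sigma> b) ` I j) t z h
    = Wfun N lam (\<lambda>j. transpose a b ` inv \<sigma> ` I j) t (\<lambda>p. z (\<sigma> p)) h"
proof -
  have "inv \<sigma> \<circ> transpose (\<sigma> a) (\<sigma> b) = transpose a b \<circ> inv \<sigma>"
    using transpose_comp_eq[OF bij_imp_bij_inv[OF assms], of a b] assms by (simp add: inv_inv_eq)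
  then show ?thesis by (simp add: Wsig_def image_comp)
qed
theorem theorem6p10:
  fixes N n a k l :: nat and lam \<sigma> :: "nat \<Rightarrow> nat" and I :: "nat \<Rightarrow> nat set"
    and t :: "nat \<Rightarrow> nat \<Rightarrow> complex" and z :: "nat \<Rightarrow> complex" and h :: complex
  assumes "(\<Sum>j=1..N. lam j) = n"
    and "\<sigma> permutes {1..n}"
    and "a \<in> {1..n-1}"
    and "I \<in> ordpart N n lam"
    and "k \<in> {1..N}" and "l \<in> {1..N}"
    and "\<sigma> a \<in> I k" and "\<sigma> (a+1) \<in> I l"
    and "\<forall>j\<in>{1..N-1}. \<forall>i\<in>{1..lsum lam j}. t j i \<noteq> 0"
    and "\<forall>j\<in>{1..N-1}. \<forall>i\<in>{1..lsum lam j}. \<forall>i'\<in>{1..lsum lam j}. i \<noteq> i' \<longrightarrow> t j i \<noteq> t j i'"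
    and "\<forall>i\<in>{1..n}. z i \<noteq> 0"
    and "1 - h * (z (\<sigma> a) / z (\<sigma> (a+1))) \<noteq> 0"
  shows "let w = z (\<sigma> a) / z (\<sigma> (a+1));
             \<sigma>' = \<sigma> \<circ> transpose a (a+1);
             I' = (\<lambda>j. transpose (\<sigma> a) (\<sigma> (a+1)) ` I j)
         in (k = l \<longrightarrow> Wsig N lam \<sigma>' I t z h = Wsig N lam \<sigma> I t z h)
          \<and> (k < l \<longrightarrow> Wsig N lam \<sigma>' I t z h =
                h * (1 - w) / (1 - h * w) * Wsig N lam \<sigma> I t z h
                + (1 - h) / (1 - h * w) * Wsig N lam \<sigma> I' t z h)
          \<and> (k > l \<longrightarrow> Wsig N lam \<sigma>' I t z h =
                (1 - w) / (1 - h * w) * Wsig N lam \<sigma> I t z h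
                + (1 - h) * w / (1 - h * w) * Wsig N lam \<sigma> I' t z h)"
proof -
  define J where "J = (\<lambda>j. inv \<sigma> ` I j)"
  have bij: "bij \<sigma>" using assms(2) by (rule permutes_bij)
  have "J \<in> ordpart N n lam"
    unfolding J_def by (rule ordpart_permutes_image[OF permutes_inv[OF assms(2)] assms(4)])
  moreover have "a \<in> J k" "Suc a \<in> J l"
    using assms(7,8) bij by (simp_all add: J_def bij_vimage_eq_inv_image[symmetric])
  ultimately interpret adjacent_pair N n lam J a k l
    using assms(3,5,6) by unfold_locales
  have J': "J' = (\<lambda>j. transpose a (a+1) ` inv \<sigma> ` I j)"
    by (rule ext) (unfold J'_def s_def, simp add: J_def)
  have "Wsig N lam \<sigma> I t z h = Wfun N lam J t (\<lambda>p. z (\<sigma> p)) h"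
    by (simp add: Wsig_def J_def)
  moreover have "Wsig N lam (\<sigma> \<circ> transpose a (a+1)) I t z h = Wfun N lam J' t (\<lambda>p. z (\<sigma> (s p))) h"
    by (simp add: Wsig_comp_transpose[OF bij] J' s_def)
  moreover have "Wsig N lam \<sigma> (\<lambda>j. transpose (\<sigma> a) (\<sigma> (a+1)) ` I j) t z h = Wfun N lam J' t (\<lambda>p. z (\<sigma> p)) h"
    by (simp add: Wsig_transpose_parts[OF bij] J')
  moreover have "\<forall>i\<in>{1..n}. z (\<sigma> i) \<noteq> 0" using assms(11) permutes_in_image[OF assms(2)] by simp
  moreover have "1 - h * (z (\<sigma> a) / z (\<sigma> (Suc a))) \<noteq> 0" using assms(12) by simp
  ultimately show ?thesis
    using Wfun_transposition[OF assms(9,10), of "\<lambda>p. z (\<sigma> p)" h] by (simp add: Let_def)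
qed

end
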